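(* Let $n\ge3$ and let $I=\{1,\dots,n-1\}$ label the path diagram $A_{n-1}$ (vertices $i$ and $i+1$ adjacent). Then $\mathrm{SO}(n)$, together with the homomorphisms $\tau_{i,i+1}:=\varepsilon_{\{i,i+1,i+2\}}:\mathrm{SO}(3)\to\mathrm{SO}(n)$ and, for $i<j$ with $j\neq i+1$, $\tau_{ij}:\mathrm{SO}(2)\times\mathrm{SO}(2)\to\mathrm{SO}(n)$, $(x,y)\mapsto\varepsilon_{\{i,i+1\}}(x)\,\varepsilon_{\{j,j+1\}}(y)$, is a universal enveloping group of the standard $\mathrm{SO}(2)$-amalgam $\mathcal A(A_{n-1},\mathrm{SO}(2))$.
   Context: For $L=\{l_1<\dots<l_m\}\subseteq\{1,\dots,n\}$, $\varepsilon_L:\mathrm{SO}(m)\to\mathrm{SO}(n)$ is the canonical embedding letting an $m\times m$ matrix act on the coordinates in $L$ (and trivially on the others). The standard $\mathrm{SO}(2)$-amalgam $\mathcal A(A_{n-1},\mathrm{SO}(2))$ consists of groups $G_{ij}$ ($i\ne j\in I$) with $G_{i,i+1}=\mathrm{SO}(3)$, connecting maps $\phi^i_{i,i+1}=\varepsilon_{\{1,2\}}$, $\phi^{i+1}_{i,i+1}=\varepsilon_{\{2,3\}}$ (upper-left and lower-right $2\times2$ blocks), and, for $|i-j|\ge2$, $i<j$, $G_{ij}=\mathrm{SO}(2)\times\mathrm{SO}(2)$ with $\phi^i_{ij}(x)=(x,1)$, $\phi^j_{ij}(x)=(1,x)$. An enveloping group of an amalgam $\{G_{ij},\phi^i_{ij}\}$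 is a group $G$ with homomorphisms $\tau_{ij}:G_{ij}\to G$ whose images generate $G$ and with $\tau_{ij}\circ\phi^j_{ij}=\tau_{kj}\circ\phi^j_{kj}$ for pairwise distinct $i,j,k$; it is universal if every other enveloping group $(H,\tau')$ receives a unique epimorphism $p:G\to H$ with $p\circ\tau_{ij}=\tau'_{ij}$. *)

theory Defs
  imports "Jordan_Normal_Form.Determinant" "HOL-Algebra.Generated_Groups"
begin

text \<open>Matrices are JNF matrices (0-based entries). The coordinates of R^n are
labelled 1..n as in the paper; row/column index i of a JNF matrix corresponds to
coordinate i+1.\<close>

definition SO_set :: "nat \<Rightarrow> real mat set" where
  "SO_set m = {A \<in> carrier_mat m m. A * transpose_mat A = 1\<^sub>m m \<and> det A = 1}"

definition SO_grp :: "nat \<Rightarrow> real mat monoid" where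
  "SO_grp m = \<lparr>carrier = SO_set m, mult = (*), one = 1\<^sub>m m\<rparr>"

text \<open>Canonical embedding eps_L : SO(card L) -> SO(n), L a subset of {1..n}:
the entry (l_a, l_b) of the result is A(a,b), where l_1 < ... < l_m enumerate L;
all other entries are those of the identity.  The 0-based position of l in L is
card {l' in L. l' < l}.\<close>

definition eps :: "nat \<Rightarrow> nat set \<Rightarrow> real mat \<Rightarrow> real mat" where
  "eps n L A = mat n n (\<lambda>(i, j).
     if Suc i \<in> L \<and> Suc j \<in> L
     then A $$ (card {l \<in> L. l < Suc i}, card {l \<in> L. l < Suc j})
     else if i = j then 1 else 0)"

abbreviation G_adj :: "real mat monoid" where "G_adj \<equiv> SO_grp 3"
abbreviation G_far :: "(real mat \<times> real mat) monoid" where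
  "G_far \<equiv> SO_grp 2 \<times>\<times> SO_grp 2"

definition phi_adj_lo :: "real mat \<Rightarrow> real mat" where "phi_adj_lo x = eps 3 {1,2} x"
definition phi_adj_hi :: "real mat \<Rightarrow> real mat" where "phi_adj_hi x = eps 3 {2,3} x"
definition phi_far_lo :: "real mat \<Rightarrow> real mat \<times> real mat" where "phi_far_lo x = (x, 1\<^sub>m 2)"
definition phi_far_hi :: "real mat \<Rightarrow> real mat \<times> real mat" where "phi_far_hi x = (1\<^sub>m 2, x)"

text \<open>A family of maps out of the amalgam into a group is given by
tA i : G_{i,i+1} -> H (1 <= i <= n-2) and tF i j : G_{ij} -> H (i < j, j >= i+2).
vmap tA tF i j is tau_{ij} o phi^j_{ij} : G_j = SO(2) -> H, for i \<noteq> j.\<close>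

definition vmap :: "(nat \<Rightarrow> real mat \<Rightarrow> 'h) \<Rightarrow> (nat \<Rightarrow> nat \<Rightarrow> real mat \<times> real mat \<Rightarrow> 'h)
    \<Rightarrow> nat \<Rightarrow> nat \<Rightarrow> real mat \<Rightarrow> 'h" where
  "vmap tA tF i j x =
     (if j = i + 1 then tA i (phi_adj_hi x)
      else if i = j + 1 then tA j (phi_adj_lo x)
      else if i < j then tF i j (phi_far_hi x)
      else tF j i (phi_far_lo x))"

definition adj_pair :: "nat \<Rightarrow> nat \<Rightarrow> bool" where
  "adj_pair n i = (1 \<le> i \<and> i + 1 \<le> n - 1)"

definition far_pair :: "nat \<Rightarrow> nat \<Rightarrow> nat \<Rightarrow> bool" where
  "far_pair n i j = (1 \<le> i \<and> i + 2 \<le> j \<and> j \<le> n - 1)"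

definition enveloping :: "nat \<Rightarrow> ('h, 'z) monoid_scheme \<Rightarrow> (nat \<Rightarrow> real mat \<Rightarrow> 'h)
    \<Rightarrow> (nat \<Rightarrow> nat \<Rightarrow> real mat \<times> real mat \<Rightarrow> 'h) \<Rightarrow> bool" where
  "enveloping n H tA tF \<longleftrightarrow>
     group H \<and>
     (\<forall>i. adj_pair n i \<longrightarrow> tA i \<in> hom G_adj H) \<and>
     (\<forall>i j. far_pair n i j \<longrightarrow> tF i j \<in> hom G_far H) \<and>
     generate H ((\<Union>i\<in>{i. adj_pair n i}. tA i ` carrier G_adj) \<union>
                 (\<Union>(i,j)\<in>{(i,j). far_pair n i j}. tF i j ` carrier G_far)) = carrier H \<and>
     (\<forall>i\<in>{1..n-1}. \<forall>j\<in>{1..n-1}. \<forall>k\<in>{1..n-1}. i \<noteq> j \<and> j \<noteq> k \<and> i \<noteq> k \<longrightarrow>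
        (\<forall>x\<in>carrier (SO_grp 2). vmap tA tF i j x = vmap tA tF k j x))"

definition tauA :: "nat \<Rightarrow> nat \<Rightarrow> real mat \<Rightarrow> real mat" where
  "tauA n i x = eps n {i, i+1, i+2} x"

definition tauF :: "nat \<Rightarrow> nat \<Rightarrow> nat \<Rightarrow> real mat \<times> real mat \<Rightarrow> real mat" where
  "tauF n i j p = eps n {i, i+1} (fst p) * eps n {j, j+1} (snd p)"

end

theory Submission
  imports Defs
begin

text \<open>
  SO(n) is generated by the rotations in pairs of consecutive coordinates (Givens reduction),
  and SO(3) is the product of the rotation groups of the coordinate pairs 12, 23, 12 (Euler
  angles). Given an enveloping group H, let V k in SO(n) x H be the graph of the vertex map
  SO(2) -> H, with SO(2) placed on the coordinates k, k+1. These subgroups satisfy the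
  relations of the diagram A_(n-1): non-neighbours commute, and V k V (k-1) V k lies in
  V (k-1) V k V (k-1). Consequently the subgroup G_m generated by V 1, ..., V (m-1) satisfies
  G_(m+1) = G_m V m G_m. Elements of G_m fix the coordinates beyond m, so an element of G_(m+1)
  with first component 1 has a trivial V m factor, and by induction G_n meets 1 x H
  trivially. As G_n also projects onto SO(n), it is the graph of the required homomorphism.
\<close>

section \<open>Block embeddings\<close>

definition block_embed :: "nat \<Rightarrow> nat \<Rightarrow> real mat \<Rightarrow> real mat" where
  "block_embed n k A = mat n n (\<lambda>(i, j).
     if k \<le> i \<and> i < k + dim_row A \<and> k \<le> j \<and> j < k + dim_row A
     then A $$ (i - k, j - k) else if i = j then 1 else 0)"

lemma block_embed_carrier [simp]: "block_embed n k A \<in> carrier_mat n n"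
  by (simp add: block_embed_def)

lemma block_embed_eq_four_block:
  assumes "A \<in> carrier_mat m m"
  shows "block_embed (k + m + r) k A =
    four_block_mat (1\<^sub>m k) (0\<^sub>m k (m + r)) (0\<^sub>m (m + r) k)
      (four_block_mat A (0\<^sub>m m r) (0\<^sub>m r m) (1\<^sub>m r))"
  using assms by (intro eq_matI) (auto simp: block_embed_def)

lemma block_embed_mult:
  assumes A: "A \<in> carrier_mat m m" and B: "B \<in> carrier_mat m m" and k: "k + m \<le> n"
  shows "block_embed n k A * block_embed n k B = block_embed n k (A * B)"
proof -
  obtain r where n: "n = k + m + r" using k le_Suc_ex by blast
  let ?E = "\<lambda>C. four_block_mat C (0\<^sub>m m r) (0\<^sub>m r m) (1\<^sub>m r)"
  have EA: "?E A \<in> carrier_mat (m + r) (m + r)" and EB: "?E B \<in> carrier_mat (m + r) (m + r)"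
    using A B by auto
  have "?E A * ?E B = ?E (A * B)"
    using A B by (subst mult_four_block_mat[of _ m m _ r]) auto
  moreover have "block_embed n k A * block_embed n k B =
      four_block_mat (1\<^sub>m k) (0\<^sub>m k (m + r)) (0\<^sub>m (m + r) k) (?E A * ?E B)"
    unfolding n block_embed_eq_four_block[OF A] block_embed_eq_four_block[OF B] using EA EB
    by (subst mult_four_block_mat[of _ k k _ "m + r"])
      (auto simp: left_mult_zero_mat[OF EB] right_mult_zero_mat[OF EA])
  ultimately show ?thesis
    using A B unfolding n by (simp add: block_embed_eq_four_block)
qed

lemma block_embed_det:
  assumes A: "A \<in> carrier_mat m m" and k: "k + m \<le> n"
  shows "det (block_embed n k A) = det A"
proof -
  obtain r where n: "n = k + m + r" using k le_Suc_ex by blast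
  have EA: "four_block_mat A (0\<^sub>m m r) (0\<^sub>m r m) (1\<^sub>m r) \<in> carrier_mat (m + r) (m + r)"
    using A by auto
  show ?thesis
    unfolding n block_embed_eq_four_block[OF A]
    using A EA by (simp add: det_four_block_mat_lower_left_zero[of _ k _ "m + r"]
        det_four_block_mat_lower_left_zero[of _ m _ r])
qed

lemma block_embed_transpose:
  "A \<in> carrier_mat m m \<Longrightarrow> transpose_mat (block_embed n k A) = block_embed n k (transpose_mat A)"
  by (intro eq_matI) (auto simp: block_embed_def)

lemma block_embed_one [simp]: "block_embed n k (1\<^sub>m m) = 1\<^sub>m n"
  by (intro eq_matI) (auto simp: block_embed_def)

lemma block_embed_block_embed:
  "x \<in> carrier_mat m m \<Longrightarrow> c + m \<le> l \<Longrightarrow> block_embed n k (block_embed l c x) = block_embed n (k + c) x"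
  by (intro eq_matI) (auto simp: block_embed_def)

lemma eps_interval:
  assumes "A \<in> carrier_mat m m"
  shows "eps n {Suc k..<Suc k + m} A = block_embed n k A"
proof -
  have "\<And>i. k \<le> i \<Longrightarrow> i < k + m \<Longrightarrow> {l \<in> {Suc k..<Suc k + m}. l < Suc i} = {Suc k..<Suc i}"
    by auto
  then show ?thesis
    using assms by (intro eq_matI) (auto simp: eps_def block_embed_def)
qed

lemma eps_pair: "1 \<le> i \<Longrightarrow> x \<in> carrier_mat 2 2 \<Longrightarrow> eps n {i, Suc i} x = block_embed n (i - 1) x"
  using eps_interval[of x 2 n "i - 1"] by (simp add: atLeastLessThanSuc insert_commute)

section \<open>Matrices acting on a set of coordinates\<close>

lemma mat_mult_entry:
  "A \<in> carrier_mat n n \<Longrightarrow> B \<in> carrier_mat n n \<Longrightarrow> i < n \<Longrightarrow> j < n \<Longrightarrow>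
    (A * B) $$ (i, j) = (\<Sum>t<n. A $$ (i, t) * B $$ (t, j))"
  by (auto simp: scalar_prod_def lessThan_atLeast0 intro!: sum.cong)

lemma sum_lessThan_single:
  "j < (n::nat) \<Longrightarrow> (\<And>t. t < n \<Longrightarrow> t \<noteq> j \<Longrightarrow> g t = (0::real)) \<Longrightarrow> (\<Sum>t<n. g t) = g j"
  by (subst sum.remove[of _ j]) (auto intro!: sum.neutral)

lemma sum_lessThan_two:
  assumes "i < j" "j < (n::nat)" and "\<And>t. t < n \<Longrightarrow> t \<noteq> i \<Longrightarrow> t \<noteq> j \<Longrightarrow> g t = (0::real)"
  shows "(\<Sum>t<n. g t) = g i + g j"
proof -
  have "(\<Sum>t<n. g t) = g j + g i + (\<Sum>t\<in>{..<n} - {j} - {i}. g t)"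
    using assms(1,2) by (simp add: sum.remove[of _ j] sum.remove[of _ i])
  also have "(\<Sum>t\<in>{..<n} - {j} - {i}. g t) = 0" using assms(3) by (intro sum.neutral) auto
  finally show ?thesis by simp
qed

lemma sum_lessThan_2: "(\<Sum>t<(2::nat). f t) = f 0 + (f 1 :: real)"
  by (simp add: numeral_2_eq_2)

lemma mult_mat_assoc4:
  "A \<in> carrier_mat n n \<Longrightarrow> B \<in> carrier_mat n n \<Longrightarrow> C \<in> carrier_mat n n \<Longrightarrow> D \<in> carrier_mat n n \<Longrightarrow>
    A * B * (C * D) = A * (B * C) * (D :: 'a :: semiring_0 mat)"
  by (simp add: assoc_mult_mat[of _ n n _ n _ n])

definition id_outside :: "nat \<Rightarrow> nat set \<Rightarrow> real mat \<Rightarrow> bool" where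
  "id_outside n S P \<longleftrightarrow>
     (\<forall>i<n. \<forall>j<n. (i \<notin> S \<or> j \<notin> S) \<longrightarrow> P $$ (i, j) = (if i = j then 1 else 0))"

lemma id_outside_one [simp]: "id_outside n S (1\<^sub>m n)"
  by (auto simp: id_outside_def)

lemma id_outside_transpose:
  "P \<in> carrier_mat n n \<Longrightarrow> id_outside n S P \<Longrightarrow> id_outside n S (transpose_mat P)"
  by (auto simp: id_outside_def)

lemma id_outside_mono: "id_outside n S P \<Longrightarrow> S \<subseteq> T \<Longrightarrow> id_outside n T P"
  unfolding id_outside_def by (meson subsetD)

lemma id_outside_block_embed: "A \<in> carrier_mat m m \<Longrightarrow> id_outside n {k..<k + m} (block_embed n k A)"
  by (auto simp: id_outside_def block_embed_def)

lemma id_outside_mult: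
  assumes P: "P \<in> carrier_mat n n" and Q: "Q \<in> carrier_mat n n"
    and sP: "id_outside n S P" and sQ: "id_outside n S Q"
  shows "id_outside n S (P * Q)"
  unfolding id_outside_def
proof (intro allI impI)
  fix i j assume i: "i < n" and j: "j < n" and ij: "i \<notin> S \<or> j \<notin> S"
  show "(P * Q) $$ (i, j) = (if i = j then 1 else 0)"
  proof (cases "j \<in> S")
    case False
    then have "(P * Q) $$ (i, j) = P $$ (i, j) * Q $$ (j, j)"
      unfolding mat_mult_entry[OF P Q i j]
      by (intro sum_lessThan_single[OF j]) (use sQ j in \<open>auto simp: id_outside_def\<close>)
    then show ?thesis using False sQ sP i j by (auto simp: id_outside_def)
  next
    case True
    then have iS: "i \<notin> S" using ij by auto
    then have "(P * Q) $$ (i, j) = P $$ (i, i) * Q $$ (i, j)"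
      unfolding mat_mult_entry[OF P Q i j]
      by (intro sum_lessThan_single[OF i]) (use sP i in \<open>auto simp: id_outside_def\<close>)
    then show ?thesis using iS sQ sP i j by (auto simp: id_outside_def)
  qed
qed

lemma id_outside_mult_entry:
  assumes P: "P \<in> carrier_mat n n" and Q: "Q \<in> carrier_mat n n"
    and sP: "id_outside n SP P" and sQ: "id_outside n SQ Q" and disj: "SP \<inter> SQ = {}"
    and i: "i < n" and j: "j < n"
  shows "(P * Q) $$ (i, j) = (if j \<in> SQ then Q $$ (i, j) else P $$ (i, j))"
proof -
  have "(P * Q) $$ (i, j) = P $$ (i, i) * Q $$ (i, j)" if "i \<notin> SP"
    unfolding mat_mult_entry[OF P Q i j]
    by (intro sum_lessThan_single[OF i]) (use sP i that in \<open>auto simp: id_outside_def\<close>)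
  moreover have "(P * Q) $$ (i, j) = P $$ (i, j) * Q $$ (j, j)" if "j \<notin> SQ"
    unfolding mat_mult_entry[OF P Q i j]
    by (intro sum_lessThan_single[OF j]) (use sQ j that in \<open>auto simp: id_outside_def\<close>)
  moreover have "(P * Q) $$ (i, j) = 0" if iP: "i \<in> SP" and jQ: "j \<in> SQ"
    unfolding mat_mult_entry[OF P Q i j]
  proof (intro sum.neutral ballI)
    fix t assume t: "t \<in> {..<n}"
    show "P $$ (i, t) * Q $$ (t, j) = 0"
    proof (cases "t \<in> SP")
      case True
      then have "t \<notin> SQ" "t \<noteq> j" using disj jQ by auto
      then show ?thesis using sQ t j by (auto simp: id_outside_def)
    next
      case False
      then show ?thesis using sP t i iP by (auto simp: id_outside_def)
    qed
  qed
  moreover have "P $$ (i, i) = 1" if "i \<notin> SP" using sP i that by (simp add: id_outside_def)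
  moreover have "Q $$ (j, j) = 1" if "j \<notin> SQ" using sQ j that by (simp add: id_outside_def)
  moreover have "Q $$ (i, j) = 0" if "i \<in> SP" "j \<in> SQ"
  proof -
    have "i \<notin> SQ" "i \<noteq> j" using disj that by auto
    then show ?thesis using sQ i j by (simp add: id_outside_def)
  qed
  ultimately show ?thesis by (cases "i \<in> SP"; cases "j \<in> SQ") auto
qed

lemma id_outside_commute:
  assumes P: "P \<in> carrier_mat n n" and Q: "Q \<in> carrier_mat n n"
    and sP: "id_outside n SP P" and sQ: "id_outside n SQ Q" and disj: "SP \<inter> SQ = {}"
  shows "P * Q = Q * P"
proof (rule eq_matI)
  fix i j assume "i < dim_row (Q * P)" and "j < dim_col (Q * P)"
  then have i: "i < n" and j: "j < n" using P Q by auto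
  show "(P * Q) $$ (i, j) = (Q * P) $$ (i, j)"
    using id_outside_mult_entry[OF P Q sP sQ disj i j] id_outside_mult_entry[OF Q P sQ sP _ i j]
      sP sQ disj i j by (cases "j \<in> SP"; cases "j \<in> SQ") (auto simp: id_outside_def Int_commute)
qed (use P Q in auto)

section \<open>The rotation groups\<close>

lemma SO_grp_simps [simp]:
  "carrier (SO_grp n) = SO_set n" "mult (SO_grp n) = (*)" "one (SO_grp n) = 1\<^sub>m n"
  by (simp_all add: SO_grp_def)

lemma SO_setD:
  assumes "A \<in> SO_set n"
  shows "A \<in> carrier_mat n n" "A * transpose_mat A = 1\<^sub>m n" "transpose_mat A * A = 1\<^sub>m n"
    "det A = 1"
proof -
  show A: "A \<in> carrier_mat n n" and AA: "A * transpose_mat A = 1\<^sub>m n" and "det A = 1"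
    using assms by (auto simp: SO_set_def)
  show "transpose_mat A * A = 1\<^sub>m n"
    by (rule mat_mult_left_right_inverse[OF A _ AA]) (use A in auto)
qed

lemma SO_setI:
  "A \<in> carrier_mat n n \<Longrightarrow> A * transpose_mat A = 1\<^sub>m n \<Longrightarrow> det A = 1 \<Longrightarrow> A \<in> SO_set n"
  by (auto simp: SO_set_def)

lemma SO_set_one [simp]: "1\<^sub>m n \<in> SO_set n"
  by (auto simp: SO_set_def)

lemma SO_set_mult:
  assumes A: "A \<in> SO_set n" and B: "B \<in> SO_set n"
  shows "A * B \<in> SO_set n"
proof -
  note a = SO_setD[OF A] and b = SO_setD[OF B]
  have "A * B * transpose_mat (A * B) = A * (B * transpose_mat B) * transpose_mat A"
    using a(1) b(1) by (simp add: transpose_mult assoc_mult_mat[of _ n n _ n _ n])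
  also have "\<dots> = 1\<^sub>m n" using a b by simp
  finally show ?thesis using a b by (intro SO_setI) (auto simp: det_mult[of _ n])
qed

lemma SO_set_transpose: "A \<in> SO_set n \<Longrightarrow> transpose_mat A \<in> SO_set n"
  using SO_setD[of A n] by (intro SO_setI) (auto simp: det_transpose)

lemma group_SO_grp: "group (SO_grp n)"
proof (rule groupI)
  fix x y z assume "x \<in> carrier (SO_grp n)" "y \<in> carrier (SO_grp n)" "z \<in> carrier (SO_grp n)"
  then show "x \<otimes>\<^bsub>SO_grp n\<^esub> y \<otimes>\<^bsub>SO_grp n\<^esub> z = x \<otimes>\<^bsub>SO_grp n\<^esub> (y \<otimes>\<^bsub>SO_grp n\<^esub> z)"
    by (auto dest!: SO_setD(1) intro: assoc_mult_mat)
next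
  fix x assume x: "x \<in> carrier (SO_grp n)"
  then show "\<one>\<^bsub>SO_grp n\<^esub> \<otimes>\<^bsub>SO_grp n\<^esub> x = x" by (auto dest!: SO_setD(1))
  show "\<exists>y\<in>carrier (SO_grp n). y \<otimes>\<^bsub>SO_grp n\<^esub> x = \<one>\<^bsub>SO_grp n\<^esub>"
    using x SO_set_transpose[of x n] SO_setD(3)[of x n] by auto
qed (auto simp: SO_set_mult)

lemma SO_grp_inv: "A \<in> SO_set n \<Longrightarrow> inv\<^bsub>SO_grp n\<^esub> A = transpose_mat A"
  by (rule group.inv_equality[OF group_SO_grp]) (auto simp: SO_setD SO_set_transpose)

lemma SO_set_cols:
  assumes A: "A \<in> SO_set n" and i: "i < n" and j: "j < n"
  shows "(\<Sum>k<n. A $$ (k, i) * A $$ (k, j)) = (if i = j then 1 else 0)"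
proof -
  note d = SO_setD[OF A]
  have "(transpose_mat A * A) $$ (i, j) = (\<Sum>k<n. A $$ (k, i) * A $$ (k, j))"
    using mat_mult_entry[OF _ d(1) i j] d(1) i by (auto intro: sum.cong)
  then show ?thesis using d(3) i j by simp
qed

lemma SO_set_rows:
  assumes A: "A \<in> SO_set n" and i: "i < n" and j: "j < n"
  shows "(\<Sum>k<n. A $$ (i, k) * A $$ (j, k)) = (if i = j then 1 else 0)"
  using SO_set_cols[OF SO_set_transpose[OF A] i j] SO_setD(1)[OF A] i j by simp

lemma subgroup_id_outside: "subgroup {A \<in> SO_set n. id_outside n S A} (SO_grp n)"
  by (rule group.subgroupI[OF group_SO_grp])
    (auto simp: SO_grp_inv SO_set_mult SO_set_transpose id_outside_mult id_outside_transpose SO_setD(1)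
      intro!: exI[of _ "1\<^sub>m n"])

lemma block_embed_SO_set:
  assumes A: "A \<in> SO_set m" and k: "k + m \<le> n"
  shows "block_embed n k A \<in> SO_set n"
  using SO_setD[OF A] k
  by (intro SO_setI) (auto simp: block_embed_transpose block_embed_mult block_embed_det)

lemma block_embed_hom: "k + m \<le> n \<Longrightarrow> block_embed n k \<in> hom (SO_grp m) (SO_grp n)"
  by (intro homI) (simp_all add: block_embed_SO_set block_embed_mult[OF SO_setD(1) SO_setD(1)])

lemma SO_set_id_outside_block:
  assumes A: "A \<in> SO_set n" and s: "id_outside n {k..<k + m} A" and km: "k + m \<le> n"
  shows "\<exists>A' \<in> SO_set m. A = block_embed n k A'"
proof -
  note d = SO_setD[OF A]
  define A' where "A' = mat m m (\<lambda>(i, j). A $$ (i + k, j + k))"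
  have A'c: "A' \<in> carrier_mat m m" by (simp add: A'_def)
  have A_eq: "A = block_embed n k A'"
    using d(1) s km by (intro eq_matI) (auto simp: block_embed_def A'_def id_outside_def)
  have block_inj: "B = C" if "B \<in> carrier_mat m m" "C \<in> carrier_mat m m"
    "block_embed n k B = block_embed n k C" for B C
  proof (rule eq_matI)
    fix i j assume "i < dim_row C" "j < dim_col C"
    then have "block_embed n k B $$ (i + k, j + k) = block_embed n k C $$ (i + k, j + k)"
      and "i < m" "j < m" using that by auto
    then show "B $$ (i, j) = C $$ (i, j)" using that km by (simp add: block_embed_def)
  qed (use that in auto)
  have "block_embed n k (A' * transpose_mat A') = block_embed n k (1\<^sub>m m)"
    using d(2) A_eq A'c km by (simp add: block_embed_mult[symmetric] block_embed_transpose)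
  then have "A' * transpose_mat A' = 1\<^sub>m m" using block_inj A'c by auto
  moreover have "det A' = 1" using block_embed_det[OF A'c km] A_eq d(4) by simp
  ultimately show ?thesis using A_eq A'c SO_setI by blast
qed

lemma SO_set_id_outside_first:
  assumes A: "A \<in> SO_set n" and s: "id_outside n {0..<1} A" and n: "1 \<le> n"
  shows "A = 1\<^sub>m n"
proof -
  obtain A' where A': "A' \<in> SO_set 1" and A_eq: "A = block_embed n 0 A'"
    using SO_set_id_outside_block[of A n 0 1] A s n by auto
  have c: "A' \<in> carrier_mat 1 1" using SO_setD(1)[OF A'] .
  have "A' $$ (0, 0) = 1" using SO_setD(4)[OF A'] det_single[OF c] by simp
  then have "A' = 1\<^sub>m 1" using c by (intro eq_matI) auto
  then show ?thesis using A_eq by simp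
qed

lemma det_2x2:
  assumes A: "A \<in> carrier_mat 2 2"
  shows "det A = A $$ (0, 0) * A $$ (1, 1) - A $$ (0, 1) * A $$ (1, 0)"
proof -
  have c: "\<And>i j. mat_delete A i j \<in> carrier_mat 1 1" using mat_delete_carrier[OF A] by simp
  have "det A = (\<Sum>j<2. A $$ (0, j) * cofactor A 0 j)" by (rule laplace_expansion_row[OF A]) simp
  also have "\<dots> = A $$ (0, 0) * cofactor A 0 0 + A $$ (0, 1) * cofactor A 0 1"
    by (simp add: numeral_2_eq_2)
  also have "cofactor A 0 0 = A $$ (1, 1)"
    unfolding cofactor_def det_single[OF c] using A by (simp add: mat_delete_def)
  also have "cofactor A 0 1 = - A $$ (1, 0)"
    unfolding cofactor_def det_single[OF c] using A by (simp add: mat_delete_def)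
  finally show ?thesis by simp
qed

definition rot :: "real \<Rightarrow> real \<Rightarrow> real mat" where
  "rot a b = mat 2 2 (\<lambda>(i, j). if i = j then a else if i = 0 then b else - b)"

lemma rot_carrier [simp]: "rot a b \<in> carrier_mat 2 2"
  by (simp add: rot_def)

lemma rot_entries [simp]:
  "rot a b $$ (0, 0) = a" "rot a b $$ (0, 1) = b" "rot a b $$ (1, 0) = - b" "rot a b $$ (1, 1) = a"
  "rot a b $$ (0, Suc 0) = b" "rot a b $$ (Suc 0, 0) = - b" "rot a b $$ (Suc 0, Suc 0) = a"
  by (simp_all add: rot_def)

lemma rot_one: "rot 1 0 = 1\<^sub>m 2"
  by (intro eq_matI) (auto simp: rot_def)

lemma rot_SO_set:
  assumes "a\<^sup>2 + b\<^sup>2 = 1"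
  shows "rot a b \<in> SO_set 2"
proof (rule SO_setI)
  show "rot a b * transpose_mat (rot a b) = 1\<^sub>m 2"
  proof (rule eq_matI)
    fix i j assume "i < dim_row (1\<^sub>m 2)" "j < dim_col (1\<^sub>m (2::nat))"
    then have ij: "i < 2" "j < 2" by auto
    then show "(rot a b * transpose_mat (rot a b)) $$ (i, j) = (1\<^sub>m 2 :: real mat) $$ (i, j)"
      using mat_mult_entry[of "rot a b" 2 "transpose_mat (rot a b)" i j] assms
      by (auto simp: sum_lessThan_2 less_2_cases_iff power2_eq_square rot_def)
  qed (auto simp: rot_def)
  show "det (rot a b) = 1" using assms by (simp add: det_2x2 power2_eq_square)
qed simp

lemma SO2_eq_rot:
  assumes x: "x \<in> SO_set 2"
  shows "x = rot (x $$ (0, 0)) (x $$ (0, 1))"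
proof -
  note d = SO_setD[OF x]
  have "x $$ (0, 0) * x $$ (0, 0) + x $$ (0, 1) * x $$ (0, 1) = 1"
    "x $$ (1, 0) * x $$ (1, 0) + x $$ (1, 1) * x $$ (1, 1) = 1"
    using SO_set_rows[OF x, of 0 0] SO_set_rows[OF x, of 1 1] by (simp_all add: sum_lessThan_2)
  moreover have "x $$ (0, 0) * x $$ (1, 1) - x $$ (0, 1) * x $$ (1, 0) = 1"
    using d(4) det_2x2[OF d(1)] by simp
  ultimately have "(x $$ (1, 1) - x $$ (0, 0))\<^sup>2 + (x $$ (1, 0) + x $$ (0, 1))\<^sup>2 = 0"
    by (simp add: power2_eq_square algebra_simps)
  then have "x $$ (1, 1) = x $$ (0, 0)" "x $$ (1, 0) = - x $$ (0, 1)"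
    by (smt (verit) sum_power2_eq_zero_iff)+
  then show ?thesis using d(1) by (intro eq_matI) (auto simp: rot_def less_2_cases_iff)
qed

lemma SO2_eq_one:
  assumes x: "x \<in> SO_set 2" and "x $$ (0, 1) = 0" "x $$ (1, 1) = 1"
  shows "x = 1\<^sub>m 2"
  using SO2_eq_rot[OF x] assms(2,3) rot_one by (metis rot_entries(4))

lemma SO2_polar:
  "\<exists>x \<in> SO_set 2. sqrt (p\<^sup>2 + q\<^sup>2) * x $$ (0, 1) = q \<and> sqrt (p\<^sup>2 + q\<^sup>2) * x $$ (1, 1) = p"
proof (cases "sqrt (p\<^sup>2 + q\<^sup>2) = 0")
  case True
  then show ?thesis using SO_set_one[of 2] by (intro bexI[of _ "1\<^sub>m 2"]) auto
next
  case False
  define c where "c = sqrt (p\<^sup>2 + q\<^sup>2)"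
  have "(p / c)\<^sup>2 + (q / c)\<^sup>2 = (p\<^sup>2 + q\<^sup>2) / c\<^sup>2" by (simp add: power_divide add_divide_distrib)
  also have "\<dots> = 1" using False unfolding c_def by simp
  finally show ?thesis
    using False rot_SO_set[of "p / c" "q / c"] unfolding c_def[symmetric]
    by (intro bexI[of _ "rot (p / c) (q / c)"]) auto
qed

section \<open>Generation of SO(n) by plane rotations\<close>

lemma block_embed_col:
  "x \<in> carrier_mat 2 2 \<Longrightarrow> Suc m < n \<Longrightarrow> k < n \<Longrightarrow> block_embed n m x $$ (k, Suc m) =
    (if k = m then x $$ (0, 1) else if k = Suc m then x $$ (1, 1) else 0)"
  by (auto simp: block_embed_def)

lemma mult_block_embed_col:
  assumes A: "A \<in> carrier_mat n n" and x: "x \<in> carrier_mat 2 2" and m: "Suc m < n" and i: "i < n"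
  shows "(A * block_embed n m x) $$ (i, Suc m) = A $$ (i, m) * x $$ (0, 1) + A $$ (i, Suc m) * x $$ (1, 1)"
proof -
  have "(A * block_embed n m x) $$ (i, Suc m) =
      A $$ (i, m) * block_embed n m x $$ (m, Suc m) +
      A $$ (i, Suc m) * block_embed n m x $$ (Suc m, Suc m)"
    unfolding mat_mult_entry[OF A block_embed_carrier i m]
    by (rule sum_lessThan_two) (use m in \<open>simp_all add: block_embed_col[OF x m]\<close>)
  then show ?thesis using m by (simp add: block_embed_col[OF x m])
qed

lemma givens_step:
  assumes a: "a \<in> SO_set n" "id_outside n {0..<Suc m} a" and m: "Suc m < n"
    and w: "\<forall>i\<le>m. c * a $$ (i, m) = w i" "\<forall>i. Suc m < i \<longrightarrow> i < n \<longrightarrow> w i = 0"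
  shows "\<exists>x \<in> SO_set 2. \<exists>c' \<ge> 0. \<forall>i<n. c' * (a * block_embed n m x) $$ (i, Suc m) = w i"
proof -
  obtain x where x: "x \<in> SO_set 2"
    and xc: "sqrt ((w (Suc m))\<^sup>2 + c\<^sup>2) * x $$ (0, 1) = c"
      "sqrt ((w (Suc m))\<^sup>2 + c\<^sup>2) * x $$ (1, 1) = w (Suc m)"
    using SO2_polar by blast
  have col: "(a * block_embed n m x) $$ (i, Suc m) =
      a $$ (i, m) * x $$ (0, 1) + (if i = Suc m then x $$ (1, 1) else 0)" if "i < n" for i
    using mult_block_embed_col[OF SO_setD(1)[OF a(1)] SO_setD(1)[OF x] m that] a(2) that m
    by (auto simp: id_outside_def)
  have ca: "c * a $$ (i, m) = (if i = Suc m then 0 else w i)" if "i < n" for i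
  proof -
    have "a $$ (i, m) = 0" if "Suc m \<le> i" using a(2) that \<open>i < n\<close> by (auto simp: id_outside_def)
    then show ?thesis using w that by (cases "i \<le> m") (auto simp: not_le Suc_le_eq)
  qed
  show ?thesis
    using xc col ca
    by (intro bexI[OF _ x] exI[of _ "sqrt ((w (Suc m))\<^sup>2 + c\<^sup>2)"]) (auto simp: algebra_simps)
qed

lemma SO_set_column_reduce:
  assumes m: "Suc m < n" and w: "\<forall>i. Suc m < i \<longrightarrow> i < n \<longrightarrow> w i = 0"
  shows "\<exists>a \<in> SO_set n. id_outside n {0..<Suc m} a \<and>
    (\<exists>x \<in> SO_set 2. \<exists>c \<ge> 0. \<forall>i<n. c * (a * block_embed n m x) $$ (i, Suc m) = w i)"
  using m w
proof (induction m arbitrary: w)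
  case 0
  then show ?case
    using givens_step[of "1\<^sub>m n" n 0 "w 0" w] by (intro bexI[of _ "1\<^sub>m n"]) auto
next
  case (Suc m)
  define w' where "w' = w(Suc (Suc m) := 0)"
  have w': "Suc m < n" "\<forall>i. Suc m < i \<longrightarrow> i < n \<longrightarrow> w' i = 0"
    using Suc.prems by (auto simp: w'_def)
  obtain a' x' c' where a': "a' \<in> SO_set n" "id_outside n {0..<Suc m} a'" and x': "x' \<in> SO_set 2"
    and c': "\<forall>i<n. c' * (a' * block_embed n m x') $$ (i, Suc m) = w' i"
    using Suc.IH[OF w'] by blast
  define a where "a = a' * block_embed n m x'"
  have a: "a \<in> SO_set n"
    unfolding a_def using SO_set_mult[OF a'(1) block_embed_SO_set[OF x']] Suc.prems by simp
  have as: "id_outside n {0..<Suc (Suc m)} a"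
    unfolding a_def using SO_setD(1)[OF a'(1)] Suc.prems
    by (intro id_outside_mult id_outside_mono[OF a'(2)]
        id_outside_mono[OF id_outside_block_embed[OF SO_setD(1)[OF x']]]) auto
  have cw: "\<forall>i\<le>Suc m. c' * a $$ (i, Suc m) = w i"
    using c' Suc.prems by (auto simp: a_def w'_def)
  show ?case
    using conjI[OF as givens_step[OF a as Suc.prems(1) cw Suc.prems(2)]] a by (rule bexI)
qed

lemma SO_set_column_scale:
  assumes A: "A \<in> SO_set n" and B: "B \<in> SO_set n" and j: "j < n" and "c \<ge> 0"
    and AB: "\<forall>i<n. c * A $$ (i, j) = B $$ (i, j)"
  shows "\<forall>i<n. A $$ (i, j) = B $$ (i, j)"
proof -
  have "1 = (\<Sum>k<n. B $$ (k, j) * B $$ (k, j))" using SO_set_cols[OF B j j] by simp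
  also have "\<dots> = (\<Sum>k<n. (c * A $$ (k, j)) * (c * A $$ (k, j)))"
    using AB by (intro sum.cong) auto
  also have "\<dots> = c\<^sup>2 * (\<Sum>k<n. A $$ (k, j) * A $$ (k, j))"
    by (simp add: sum_distrib_left power2_eq_square algebra_simps)
  also have "\<dots> = c\<^sup>2" using SO_set_cols[OF A j j] by simp
  finally have "c = 1" using \<open>c \<ge> 0\<close> by (simp add: power2_eq_1_iff)
  then show ?thesis using AB by simp
qed

lemma SO_set_transpose_mult_col:
  assumes A: "A \<in> SO_set n" and B: "B \<in> SO_set n" and j: "j < n"
    and AB: "\<forall>k<n. A $$ (k, j) = B $$ (k, j)" and i: "i < n"
  shows "(transpose_mat A * B) $$ (i, j) = (if i = j then 1 else 0)"
proof -
  have "(transpose_mat A * B) $$ (i, j) = (\<Sum>k<n. A $$ (k, i) * A $$ (k, j))"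
    using mat_mult_entry[OF _ SO_setD(1)[OF B] i j] SO_setD(1)[OF A] AB i by (auto intro: sum.cong)
  then show ?thesis using SO_set_cols[OF A i j] by simp
qed

lemma SO_set_unit_col_imp_unit_row:
  assumes B: "B \<in> SO_set n" and j: "j < n" and col: "\<forall>i<n. B $$ (i, j) = (if i = j then 1 else 0)"
    and k: "k < n" "k \<noteq> j"
  shows "B $$ (j, k) = 0"
proof -
  have "(\<Sum>t<n. B $$ (j, t) * B $$ (j, t)) = B $$ (j, j) * B $$ (j, j) +
      (\<Sum>t\<in>{..<n} - {j}. B $$ (j, t) * B $$ (j, t))"
    using j by (subst sum.remove[of _ j]) auto
  then have "(\<Sum>t\<in>{..<n} - {j}. B $$ (j, t) * B $$ (j, t)) = 0"
    using SO_set_rows[OF B j j] col j by simp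
  then have "\<forall>t\<in>{..<n} - {j}. B $$ (j, t) * B $$ (j, t) = 0"
    by (subst (asm) sum_nonneg_eq_0_iff) auto
  then show ?thesis using k by auto
qed

lemma id_outside_remove_last:
  assumes B: "id_outside n {0..<Suc k} B"
    and col: "\<forall>i<n. B $$ (i, k) = (if i = k then 1 else 0)"
    and row: "\<forall>j<n. j \<noteq> k \<longrightarrow> B $$ (k, j) = 0"
  shows "id_outside n {0..<k} B"
  unfolding id_outside_def
proof (intro allI impI)
  fix i j assume i: "i < n" and j: "j < n" and ij: "i \<notin> {0..<k} \<or> j \<notin> {0..<k}"
  show "B $$ (i, j) = (if i = j then 1 else 0)"
  proof (cases "i \<notin> {0..<Suc k} \<or> j \<notin> {0..<Suc k}")
    case True
    then show ?thesis using B i j by (simp add: id_outside_def)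
  next
    case False
    then have "i = k \<or> j = k" using ij by auto
    then show ?thesis using col row i j by auto
  qed
qed

lemma SO_set_decomp:
  assumes m: "Suc m < n" and g: "g \<in> SO_set n" and gs: "id_outside n {0..<Suc (Suc m)} g"
  shows "\<exists>a x b. a \<in> SO_set n \<and> id_outside n {0..<Suc m} a \<and> x \<in> SO_set 2 \<and>
    b \<in> SO_set n \<and> id_outside n {0..<Suc m} b \<and> g = a * block_embed n m x * b"
proof -
  have col0: "\<forall>i. Suc m < i \<longrightarrow> i < n \<longrightarrow> g $$ (i, Suc m) = 0"
    using gs m by (auto simp: id_outside_def)
  obtain a x c where a: "a \<in> SO_set n" "id_outside n {0..<Suc m} a" and x: "x \<in> SO_set 2"
    and "c \<ge> 0" and c: "\<forall>i<n. c * (a * block_embed n m x) $$ (i, Suc m) = g $$ (i, Suc m)"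
    using SO_set_column_reduce[OF m col0] by blast
  define r where "r = a * block_embed n m x"
  have r: "r \<in> SO_set n"
    unfolding r_def using SO_set_mult[OF a(1) block_embed_SO_set[OF x]] m by simp
  have rs: "id_outside n {0..<Suc (Suc m)} r"
    unfolding r_def using SO_setD(1)[OF a(1)]
    by (intro id_outside_mult id_outside_mono[OF a(2)]
        id_outside_mono[OF id_outside_block_embed[OF SO_setD(1)[OF x]]]) auto
  have rg: "\<forall>i<n. r $$ (i, Suc m) = g $$ (i, Suc m)"
    using SO_set_column_scale[OF r g m \<open>c \<ge> 0\<close> c[folded r_def]] .
  define b where "b = transpose_mat r * g"
  have b: "b \<in> SO_set n" unfolding b_def by (intro SO_set_mult SO_set_transpose r g)
  have bcol: "\<forall>i<n. b $$ (i, Suc m) = (if i = Suc m then 1 else 0)"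
    unfolding b_def using SO_set_transpose_mult_col[OF r g m rg] by blast
  have brow: "\<forall>k<n. k \<noteq> Suc m \<longrightarrow> b $$ (Suc m, k) = 0"
    using SO_set_unit_col_imp_unit_row[OF b m bcol] by blast
  have "id_outside n {0..<Suc (Suc m)} b"
    unfolding b_def using SO_setD(1)[OF r] SO_setD(1)[OF g]
    by (intro id_outside_mult id_outside_transpose rs gs) auto
  then have "id_outside n {0..<Suc m} b"
    using bcol brow by (rule id_outside_remove_last)
  moreover have "g = r * b"
    unfolding b_def using SO_setD(1,2)[OF r] SO_setD(1)[OF g]
    by (simp add: assoc_mult_mat[of _ n n _ n _ n, symmetric])
  ultimately show ?thesis using a x b unfolding r_def by blast
qed

definition plane_rotations :: "nat \<Rightarrow> real mat set" where
  "plane_rotations n = {block_embed n k x | k x. Suc (Suc k) \<le> n \<and> x \<in> SO_set 2}"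

lemma plane_rotations_subset: "plane_rotations n \<subseteq> SO_set n"
  by (auto simp: plane_rotations_def block_embed_SO_set)

lemma id_outside_in_generate_plane_rotations:
  assumes "Suc m \<le> n" and "g \<in> SO_set n" and "id_outside n {0..<Suc m} g"
  shows "g \<in> generate (SO_grp n) (plane_rotations n)"
  using assms
proof (induction m arbitrary: g)
  case 0
  then show ?case using SO_set_id_outside_first generate.one[of "SO_grp n"] by simp
next
  case (Suc m)
  then have "Suc m < n" by simp
  then obtain a x b where a: "a \<in> SO_set n" "id_outside n {0..<Suc m} a"
    and x: "x \<in> SO_set 2" and b: "b \<in> SO_set n" "id_outside n {0..<Suc m} b"
    and g: "g = a * block_embed n m x * b"
    using SO_set_decomp Suc.prems(2,3) by blast
  have "block_embed n m x \<in> generate (SO_grp n) (plane_rotations n)"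
    using x Suc.prems by (intro generate.incl) (auto simp: plane_rotations_def)
  moreover have "a \<in> generate (SO_grp n) (plane_rotations n)" "b \<in> generate (SO_grp n) (plane_rotations n)"
    using Suc.IH[OF Suc_leD[OF Suc.prems(1)]] a b by blast+
  ultimately show ?case
    unfolding g using generate.eng[where G = "SO_grp n"] by simp
qed

lemma generate_plane_rotations:
  assumes n: "1 \<le> n"
  shows "generate (SO_grp n) (plane_rotations n) = SO_set n"
proof
  show "generate (SO_grp n) (plane_rotations n) \<subseteq> SO_set n"
    using group.generate_incl[OF group_SO_grp, of "plane_rotations n" n] plane_rotations_subset
    by simp
  show "SO_set n \<subseteq> generate (SO_grp n) (plane_rotations n)"
  proof
    fix g assume "g \<in> SO_set n"
    moreover have "id_outside n {0..<Suc (n - 1)} g" by (auto simp: id_outside_def)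
    ultimately show "g \<in> generate (SO_grp n) (plane_rotations n)"
      using id_outside_in_generate_plane_rotations[of "n - 1" n g] n by simp
  qed
qed

lemma SO3_euler:
  assumes X: "X \<in> SO_set 3"
  shows "\<exists>a b c. a \<in> SO_set 2 \<and> b \<in> SO_set 2 \<and> c \<in> SO_set 2 \<and>
    X = block_embed 3 0 a * block_embed 3 1 b * block_embed 3 0 c"
proof -
  have "id_outside 3 {0..<Suc (Suc 1)} X" by (auto simp: id_outside_def)
  then obtain a x b where a: "a \<in> SO_set 3" "id_outside 3 {0..<Suc 1} a" and x: "x \<in> SO_set 2"
    and b: "b \<in> SO_set 3" "id_outside 3 {0..<Suc 1} b" and X_eq: "X = a * block_embed 3 1 x * b"
    using SO_set_decomp[of 1 3 X] X by auto
  obtain a' b' where "a' \<in> SO_set 2" "a = block_embed 3 0 a'" "b' \<in> SO_set 2" "b = block_embed 3 0 b'"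
    using SO_set_id_outside_block[of a 3 0 2] SO_set_id_outside_block[of b 3 0 2] a b by auto
  then show ?thesis using x X_eq by blast
qed

section \<open>Chains of subgroups with braid relations\<close>

lemma (in group) commute_generate:
  assumes v: "v \<in> carrier G" and S: "S \<subseteq> carrier G" and comm: "\<forall>s\<in>S. v \<otimes> s = s \<otimes> v"
    and g: "g \<in> generate G S"
  shows "v \<otimes> g = g \<otimes> v"
  using g
proof induction
  case one
  then show ?case using v by simp
next
  case (incl h)
  then show ?case using comm by simp
next
  case (inv h)
  then have h: "h \<in> carrier G" using S by auto
  have "v \<otimes> inv h = inv h \<otimes> (h \<otimes> v) \<otimes> inv h" using v h by (simp flip: m_assoc)
  also have "\<dots> = inv h \<otimes> (v \<otimes> h) \<otimes> inv h" using comm inv by simp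
  also have "\<dots> = inv h \<otimes> v" using v h by (simp add: m_assoc)
  finally show ?case .
next
  case (eng h1 h2)
  then have h: "h1 \<in> carrier G" "h2 \<in> carrier G" using generate_in_carrier[OF S] by auto
  have "v \<otimes> (h1 \<otimes> h2) = h1 \<otimes> (v \<otimes> h2)" using eng.IH(1) v h by (simp flip: m_assoc)
  also have "\<dots> = h1 \<otimes> h2 \<otimes> v" using eng.IH(2) v h by (simp add: m_assoc)
  finally show ?case .
qed

lemma (in group) hom_eq_on_generate:
  assumes f: "f \<in> hom G K" and g: "g \<in> hom G K" and K: "group K" and S: "S \<subseteq> carrier G"
    and fg: "\<forall>s\<in>S. f s = g s" and x: "x \<in> generate G S"
  shows "f x = g x"
proof -
  interpret f: group_hom G K f using f K by (simp add: group_hom_def group_hom_axioms_def is_group)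
  interpret g: group_hom G K g using g K by (simp add: group_hom_def group_hom_axioms_def is_group)
  from x show ?thesis
  proof induction
    case (inv h)
    then show ?case using fg S by auto
  next
    case (eng h1 h2)
    then show ?case using generate_in_carrier[OF S] by simp
  qed (use fg in simp_all)
qed

lemma mem_set_mult3:
  "x \<in> A <#>\<^bsub>G\<^esub> B <#>\<^bsub>G\<^esub> C \<longleftrightarrow> (\<exists>a\<in>A. \<exists>b\<in>B. \<exists>c\<in>C. x = a \<otimes>\<^bsub>G\<^esub> b \<otimes>\<^bsub>G\<^esub> c)"
  by (auto simp: set_mult_def)

lemma (in group) set_mult3_mult_closed:
  assumes A: "subgroup A G" and B: "subgroup B G"
    and BAB: "\<And>v c v'. v \<in> B \<Longrightarrow> c \<in> A \<Longrightarrow> v' \<in> B \<Longrightarrow> v \<otimes> c \<otimes> v' \<in> A <#> B <#> A"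
    and "x \<in> A <#> B <#> A" "y \<in> A <#> B <#> A"
  shows "x \<otimes> y \<in> A <#> B <#> A"
proof -
  note Ac = subgroup.mem_carrier[OF A] and Bc = subgroup.mem_carrier[OF B]
  obtain a v b a' v' b' where x: "x = a \<otimes> v \<otimes> b" "a \<in> A" "v \<in> B" "b \<in> A"
    and y: "y = a' \<otimes> v' \<otimes> b'" "a' \<in> A" "v' \<in> B" "b' \<in> A"
    using assms(4,5) unfolding mem_set_mult3 by blast
  obtain a1 w b1 where k: "v \<otimes> (b \<otimes> a') \<otimes> v' = a1 \<otimes> w \<otimes> b1" "a1 \<in> A" "w \<in> B" "b1 \<in> A"
    using BAB[OF x(3) subgroup.m_closed[OF A x(4) y(2)] y(3)] unfolding mem_set_mult3 by blast
  have "x \<otimes> y = a \<otimes> (v \<otimes> (b \<otimes> a') \<otimes> v') \<otimes> b'"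
    using x y Ac Bc by (simp add: m_assoc)
  also have "\<dots> = (a \<otimes> a1) \<otimes> w \<otimes> (b1 \<otimes> b')"
    unfolding k(1) using x y k Ac Bc by (simp add: m_assoc)
  finally show ?thesis
    unfolding mem_set_mult3 using subgroup.m_closed[OF A] x y k by blast
qed

lemma (in group) subgroup_set_mult3:
  assumes A: "subgroup A G" and B: "subgroup B G"
    and BAB: "\<And>v c v'. v \<in> B \<Longrightarrow> c \<in> A \<Longrightarrow> v' \<in> B \<Longrightarrow> v \<otimes> c \<otimes> v' \<in> A <#> B <#> A"
  shows "subgroup (A <#> B <#> A) G"
proof
  note Ac = subgroup.mem_carrier[OF A] and Bc = subgroup.mem_carrier[OF B]
  show "A <#> B <#> A \<subseteq> carrier G" by (auto simp: mem_set_mult3 Ac Bc)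
  show "\<one> \<in> A <#> B <#> A"
    unfolding mem_set_mult3 using subgroup.one_closed[OF A] subgroup.one_closed[OF B] by force
next
  fix x assume "x \<in> A <#> B <#> A"
  then obtain a v b where x: "x = a \<otimes> v \<otimes> b" "a \<in> A" "v \<in> B" "b \<in> A"
    unfolding mem_set_mult3 by blast
  then have "inv x = inv b \<otimes> inv v \<otimes> inv a"
    using subgroup.mem_carrier[OF A] subgroup.mem_carrier[OF B] by (simp add: inv_mult_group m_assoc)
  then show "inv x \<in> A <#> B <#> A"
    unfolding mem_set_mult3 using x subgroup.m_inv_closed[OF A] subgroup.m_inv_closed[OF B] by blast
qed (rule set_mult3_mult_closed[OF A B BAB])

text \<open>The images of the vertex groups of an amalgam over the path diagram A_N.\<close>

locale subgroup_chain = group G for G (structure) +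
  fixes W :: "nat \<Rightarrow> 'a set" and N :: nat
  assumes subgroup_W: "\<And>k. 1 \<le> k \<Longrightarrow> k \<le> N \<Longrightarrow> subgroup (W k) G"
    and commute_W: "\<And>k l u v. 1 \<le> l \<Longrightarrow> l + 2 \<le> k \<Longrightarrow> k \<le> N \<Longrightarrow> u \<in> W l \<Longrightarrow> v \<in> W k \<Longrightarrow>
      u \<otimes> v = v \<otimes> u"
    and braid_W: "\<And>k x y z. 2 \<le> k \<Longrightarrow> k \<le> N \<Longrightarrow> x \<in> W k \<Longrightarrow> y \<in> W (k - 1) \<Longrightarrow> z \<in> W k \<Longrightarrow>
      x \<otimes> y \<otimes> z \<in> W (k - 1) <#> W k <#> W (k - 1)"
begin

definition gen_below :: "nat \<Rightarrow> 'a set" where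
  "gen_below m = generate G (\<Union>k\<in>{1..<m}. W k)"

lemma W_carrier: "1 \<le> k \<Longrightarrow> k \<le> N \<Longrightarrow> W k \<subseteq> carrier G"
  using subgroup_W subgroup.subset by blast

lemma gens_below_carrier: "m \<le> Suc N \<Longrightarrow> (\<Union>k\<in>{1..<m}. W k) \<subseteq> carrier G"
  using W_carrier by fastforce

lemma subgroup_gen_below: "m \<le> Suc N \<Longrightarrow> subgroup (gen_below m) G"
  unfolding gen_below_def by (rule generate_is_subgroup[OF gens_below_carrier])

lemma gen_below_mono: "m \<le> m' \<Longrightarrow> gen_below m \<subseteq> gen_below m'"
  unfolding gen_below_def by (intro mono_generate UN_mono) auto

lemma W_subset_gen_below: "1 \<le> k \<Longrightarrow> k < m \<Longrightarrow> W k \<subseteq> gen_below m"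
  unfolding gen_below_def by (intro subsetI generate.incl) auto

lemma gen_below_one: "gen_below 1 = {\<one>}"
  unfolding gen_below_def using generate_empty by simp

lemma gen_below_Suc_subset:
  assumes m: "1 \<le> m" "m \<le> N"
    and BAB: "\<And>v c v'. v \<in> W m \<Longrightarrow> c \<in> gen_below m \<Longrightarrow> v' \<in> W m \<Longrightarrow>
      v \<otimes> c \<otimes> v' \<in> gen_below m <#> W m <#> gen_below m"
  shows "gen_below (Suc m) \<subseteq> gen_below m <#> W m <#> gen_below m"
proof -
  have A: "subgroup (gen_below m) G" using subgroup_gen_below m by simp
  have B: "subgroup (W m) G" using subgroup_W m by simp
  have "(\<Union>k\<in>{1..<Suc m}. W k) \<subseteq> gen_below m <#> W m <#> gen_below m"
  proof (intro UN_least)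
    fix k assume "k \<in> {1..<Suc m}"
    then have that: "1 \<le> k" "k < Suc m" by auto
    show "W k \<subseteq> gen_below m <#> W m <#> gen_below m"
  proof
    fix g assume g: "g \<in> W k"
    show "g \<in> gen_below m <#> W m <#> gen_below m"
    proof (cases "k = m")
      case True
      then have "g = \<one> \<otimes> g \<otimes> \<one>" using g subgroup.mem_carrier[OF B] by simp
      then show ?thesis
        unfolding mem_set_mult3 using True g subgroup.one_closed[OF A] by blast
    next
      case False
      then have "k < m" using that by simp
      then have "g \<in> gen_below m" using g that W_subset_gen_below by auto
      moreover have "g = g \<otimes> \<one> \<otimes> \<one>" using subgroup.mem_carrier[OF A calculation] by simp
      ultimately show ?thesis
        unfolding mem_set_mult3 using subgroup.one_closed[OF A] subgroup.one_closed[OF B] by blast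
    qed
  qed
  qed
  then show ?thesis
    unfolding gen_below_def[of "Suc m"]
    by (rule generate_subgroup_incl[OF _ subgroup_set_mult3[OF A B BAB]])
qed

lemma W_commute_gen_below:
  assumes k: "m + 1 \<le> k" "k \<le> N" and v: "v \<in> W k" and g: "g \<in> gen_below m"
  shows "v \<otimes> g = g \<otimes> v"
proof (rule commute_generate[OF _ gens_below_carrier])
  show "v \<in> carrier G" using W_carrier[of k] k v by auto
  show "g \<in> generate G (\<Union>l\<in>{1..<m}. W l)" using g unfolding gen_below_def .
  show "\<forall>s\<in>\<Union>l\<in>{1..<m}. W l. v \<otimes> s = s \<otimes> v"
    using commute_W[of _ k _ v] k v by fastforce
qed (use k in simp)

lemma W_gen_below_W_step:
  assumes m: "1 \<le> m" "Suc m \<le> N"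
    and IH: "gen_below (Suc m) \<subseteq> gen_below m <#> W m <#> gen_below m"
    and v: "v \<in> W (Suc m)" "v' \<in> W (Suc m)" and "c \<in> gen_below (Suc m)"
  shows "v \<otimes> c \<otimes> v' \<in> gen_below (Suc m) <#> W (Suc m) <#> gen_below (Suc m)"
proof -
  have "c \<in> gen_below m <#> W m <#> gen_below m" using IH \<open>c \<in> gen_below (Suc m)\<close> by blast
  then obtain a u b where c: "c = a \<otimes> u \<otimes> b" "a \<in> gen_below m" "u \<in> W m" "b \<in> gen_below m"
    unfolding mem_set_mult3 by blast
  obtain a1 w b1 where braid: "v \<otimes> u \<otimes> v' = a1 \<otimes> w \<otimes> b1" "a1 \<in> W m" "w \<in> W (Suc m)" "b1 \<in> W m"
    using braid_W[of "Suc m" v u v'] v c m unfolding mem_set_mult3 by auto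
  have Gm: "subgroup (gen_below m) G" "subgroup (gen_below (Suc m)) G"
    using subgroup_gen_below m by auto
  have carr: "v \<in> carrier G" "v' \<in> carrier G" "u \<in> carrier G" "a \<in> carrier G" "b \<in> carrier G"
    "a1 \<in> carrier G" "b1 \<in> carrier G" "w \<in> carrier G"
    using v c braid W_carrier[of m] W_carrier[of "Suc m"] m subgroup.mem_carrier[OF Gm(1)] by auto
  have "v \<otimes> c \<otimes> v' = (v \<otimes> a) \<otimes> u \<otimes> (b \<otimes> v')" using carr c by (simp add: m_assoc)
  also have "\<dots> = (a \<otimes> v) \<otimes> u \<otimes> (v' \<otimes> b)"
    using W_commute_gen_below[of m "Suc m"] v c m by simp
  also have "\<dots> = a \<otimes> (v \<otimes> u \<otimes> v') \<otimes> b" using carr by (simp add: m_assoc)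
  also have "\<dots> = (a \<otimes> a1) \<otimes> w \<otimes> (b1 \<otimes> b)" unfolding braid(1) using carr by (simp add: m_assoc)
  finally have eq: "v \<otimes> c \<otimes> v' = (a \<otimes> a1) \<otimes> w \<otimes> (b1 \<otimes> b)" .
  have "a \<otimes> a1 \<in> gen_below (Suc m)" "b1 \<otimes> b \<in> gen_below (Suc m)"
    using subgroup.m_closed[OF Gm(2)] gen_below_mono[of m "Suc m"] W_subset_gen_below[of m "Suc m"]
      c braid m by auto
  then show ?thesis unfolding mem_set_mult3 eq using braid by blast
qed

lemma gen_below_decomp:
  "1 \<le> m \<Longrightarrow> m \<le> N \<Longrightarrow> gen_below (Suc m) \<subseteq> gen_below m <#> W m <#> gen_below m"
proof (induction m rule: nat_induct_at_least)
  case base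
  show ?case
  proof (rule gen_below_Suc_subset)
    fix v c v' assume v: "v \<in> W 1" "v' \<in> W 1" and "c \<in> gen_below 1"
    moreover have "v \<in> carrier G" "v' \<in> carrier G" using W_carrier[of 1] v base by auto
    ultimately have "v \<otimes> c \<otimes> v' = \<one> \<otimes> (v \<otimes> v') \<otimes> \<one>"
      using gen_below_one by auto
    moreover have "v \<otimes> v' \<in> W 1" using subgroup.m_closed[OF subgroup_W] v base by simp
    ultimately show "v \<otimes> c \<otimes> v' \<in> gen_below 1 <#> W 1 <#> gen_below 1"
      unfolding mem_set_mult3 gen_below_one by blast
  qed (use base in auto)
next
  case (Suc m)
  show ?case
  proof (rule gen_below_Suc_subset)
    show "v \<otimes> c \<otimes> v' \<in> gen_below (Suc m) <#> W (Suc m) <#> gen_below (Suc m)"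
      if "v \<in> W (Suc m)" "c \<in> gen_below (Suc m)" "v' \<in> W (Suc m)" for v c v'
      by (rule W_gen_below_W_step) (use Suc that in auto)
  qed (use Suc in auto)
qed

lemma gen_below_kernel_trivial:
  assumes pi: "group_hom G K \<pi>"
    and triv: "\<And>m v. 1 \<le> m \<Longrightarrow> m \<le> N \<Longrightarrow> v \<in> W m \<Longrightarrow> \<pi> v \<in> \<pi> ` gen_below m \<Longrightarrow> v = \<one>"
    and m: "1 \<le> m" "m \<le> Suc N" and x: "x \<in> gen_below m" "\<pi> x = \<one>\<^bsub>K\<^esub>"
  shows "x = \<one>"
  using m x
proof (induction m arbitrary: x rule: nat_induct_at_least)
  case base
  then show ?case using gen_below_one by simp
next
  case (Suc m)
  have "x \<in> gen_below m <#> W m <#> gen_below m" using gen_below_decomp[of m] Suc by auto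
  then obtain a v b where xd: "x = a \<otimes> v \<otimes> b" "a \<in> gen_below m" "v \<in> W m" "b \<in> gen_below m"
    unfolding mem_set_mult3 by blast
  have Gm: "subgroup (gen_below m) G" using subgroup_gen_below Suc by simp
  have carr: "a \<in> carrier G" "b \<in> carrier G" "v \<in> carrier G"
    using xd subgroup.mem_carrier[OF Gm] W_carrier Suc by auto
  interpret pi: group_hom G K \<pi> by (rule pi)
  have "v = inv a \<otimes> x \<otimes> inv b" using xd carr by (simp add: m_assoc inv_solve_left)
  then have "\<pi> v = \<pi> (inv a \<otimes> x \<otimes> inv b)" by (rule arg_cong)
  also have "\<dots> = \<pi> (inv a) \<otimes>\<^bsub>K\<^esub> \<pi> x \<otimes>\<^bsub>K\<^esub> \<pi> (inv b)"
    using xd(1) carr by (simp only: pi.hom_mult m_closed inv_closed)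
  also have "\<dots> = \<pi> (inv a \<otimes> inv b)" using Suc.prems(3) carr by simp
  finally have "\<pi> v = \<pi> (inv a \<otimes> inv b)" .
  moreover have "inv a \<otimes> inv b \<in> gen_below m"
    using xd subgroup.m_closed[OF Gm] subgroup.m_inv_closed[OF Gm] by simp
  ultimately have "v = \<one>" using triv[OF Suc.hyps _ xd(3)] Suc.prems by auto
  then have "x \<in> gen_below m" "\<pi> x = \<one>\<^bsub>K\<^esub>"
    using xd carr subgroup.m_closed[OF Gm] Suc.prems by auto
  then show ?case using Suc by simp
qed

end

section \<open>SO(n) as an enveloping group\<close>

lemma block_embed_commute:
  assumes x: "x \<in> carrier_mat 2 2" and y: "y \<in> carrier_mat 2 2" and kl: "k + 2 \<le> l"
  shows "block_embed n k x * block_embed n l y = block_embed n l y * block_embed n k x"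
  by (rule id_outside_commute[OF block_embed_carrier block_embed_carrier
        id_outside_block_embed[OF x] id_outside_block_embed[OF y]]) (use kl in auto)

lemma phi_adj_lo_eq: "x \<in> carrier_mat 2 2 \<Longrightarrow> phi_adj_lo x = block_embed 3 0 x"
  using eps_pair[of 1 x 3] by (simp add: phi_adj_lo_def numeral_2_eq_2)

lemma phi_adj_hi_eq: "x \<in> carrier_mat 2 2 \<Longrightarrow> phi_adj_hi x = block_embed 3 1 x"
  using eps_pair[of 2 x 3] by (simp add: phi_adj_hi_def)

lemma tauA_eq: "1 \<le> i \<Longrightarrow> X \<in> carrier_mat 3 3 \<Longrightarrow> tauA n i X = block_embed n (i - 1) X"
proof -
  assume "1 \<le> i" "X \<in> carrier_mat 3 3"
  moreover have "{i, i + 1, i + 2} = {Suc (i - 1)..<Suc (i - 1) + 3}" using \<open>1 \<le> i\<close> by auto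
  ultimately show ?thesis using eps_interval[of X 3 n "i - 1"] by (simp add: tauA_def)
qed

lemma tauF_eq:
  "1 \<le> i \<Longrightarrow> 1 \<le> j \<Longrightarrow> x \<in> carrier_mat 2 2 \<Longrightarrow> y \<in> carrier_mat 2 2 \<Longrightarrow>
    tauF n i j (x, y) = block_embed n (i - 1) x * block_embed n (j - 1) y"
  by (simp add: tauF_def eps_pair)

lemma adj_pairD: "adj_pair n i \<Longrightarrow> 1 \<le> i \<and> i + 2 \<le> n"
  by (auto simp: adj_pair_def)

lemma tauA_hom:
  assumes "adj_pair n i"
  shows "tauA n i \<in> hom G_adj (SO_grp n)"
proof -
  have i: "1 \<le> i" "i - 1 + 3 \<le> n" using assms by (auto simp: adj_pair_def)
  have "block_embed n (i - 1) \<in> hom G_adj (SO_grp n)" using block_embed_hom[OF i(2)] .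
  moreover have "tauA n i X = block_embed n (i - 1) X" if "X \<in> SO_set 3" for X
    using tauA_eq[OF i(1)] SO_setD(1) that by simp
  ultimately show ?thesis by (auto simp: hom_def Pi_def SO_set_mult)
qed

lemma tauF_hom:
  assumes "far_pair n i j"
  shows "tauF n i j \<in> hom G_far (SO_grp n)"
proof -
  have ij: "1 \<le> i" "1 \<le> j" "(i - 1) + 2 \<le> j - 1" "(j - 1) + 2 \<le> n"
    using assms by (auto simp: far_pair_def)
  let ?Ri = "block_embed n (i - 1)" and ?Rj = "block_embed n (j - 1)"
  show ?thesis
  proof (rule homI)
    fix p assume "p \<in> carrier G_far"
    then show "tauF n i j p \<in> carrier (SO_grp n)"
      using ij by (auto simp: tauF_eq SO_setD(1) SO_set_mult block_embed_SO_set)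
  next
    fix p q assume "p \<in> carrier G_far" "q \<in> carrier G_far"
    then obtain x y x' y' where pq: "p = (x, y)" "q = (x', y')"
      and c: "x \<in> SO_set 2" "y \<in> SO_set 2" "x' \<in> SO_set 2" "y' \<in> SO_set 2" by auto
    note cm = SO_setD(1)[OF c(1)] SO_setD(1)[OF c(2)] SO_setD(1)[OF c(3)] SO_setD(1)[OF c(4)]
    have "tauF n i j (p \<otimes>\<^bsub>G_far\<^esub> q) = ?Ri x * ?Ri x' * (?Rj y * ?Rj y')"
      using pq cm ij by (simp add: tauF_eq block_embed_mult)
    also have "\<dots> = ?Ri x * (?Ri x' * ?Rj y) * ?Rj y'"
      by (rule mult_mat_assoc4[of _ n]) simp_all
    also have "\<dots> = ?Ri x * (?Rj y * ?Ri x') * ?Rj y'"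
      using block_embed_commute[OF cm(3) cm(2) ij(3)] by simp
    also have "\<dots> = tauF n i j p \<otimes>\<^bsub>SO_grp n\<^esub> tauF n i j q"
      using pq cm ij by (simp add: tauF_eq mult_mat_assoc4[OF block_embed_carrier block_embed_carrier
          block_embed_carrier block_embed_carrier])
    finally show "tauF n i j (p \<otimes>\<^bsub>G_far\<^esub> q) = tauF n i j p \<otimes>\<^bsub>SO_grp n\<^esub> tauF n i j q" .
  qed
qed

lemma vmap_tau:
  assumes i: "i \<in> {1..n-1}" and j: "j \<in> {1..n-1}" and ij: "i \<noteq> j" and x: "x \<in> SO_set 2"
  shows "vmap (tauA n) (tauF n) i j x = block_embed n (j - 1) x"
proof -
  have xc: "x \<in> carrier_mat 2 2" using SO_setD(1)[OF x] .
  have c3: "block_embed 3 1 x \<in> carrier_mat 3 3" "block_embed 3 0 x \<in> carrier_mat 3 3" by auto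
  consider "j = i + 1" | "i = j + 1" | "i < j" "j \<noteq> i + 1" | "j < i" "i \<noteq> j + 1"
    using ij by linarith
  then show ?thesis
  proof cases
    case 1
    then show ?thesis
      using i xc c3 by (simp add: vmap_def phi_adj_hi_eq tauA_eq block_embed_block_embed)
  next
    case 2
    then show ?thesis
      using j xc c3 by (simp add: vmap_def phi_adj_lo_eq tauA_eq block_embed_block_embed)
  next
    case 3
    then show ?thesis
      using i j xc by (simp add: vmap_def phi_far_hi_def tauF_eq left_mult_one_mat[OF block_embed_carrier])
  next
    case 4
    then show ?thesis
      using i j xc by (simp add: vmap_def phi_far_lo_def tauF_eq right_mult_one_mat[OF block_embed_carrier])
  qed
qed

definition env_gens :: "nat \<Rightarrow> (nat \<Rightarrow> real mat \<Rightarrow> 'h)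
    \<Rightarrow> (nat \<Rightarrow> nat \<Rightarrow> real mat \<times> real mat \<Rightarrow> 'h) \<Rightarrow> 'h set" where
  "env_gens n tA tF = (\<Union>i\<in>{i. adj_pair n i}. tA i ` carrier G_adj) \<union>
     (\<Union>(i, j)\<in>{(i, j). far_pair n i j}. tF i j ` carrier G_far)"

lemma env_gens_image:
  assumes "\<forall>i. adj_pair n i \<longrightarrow> (\<forall>x\<in>carrier G_adj. p (tA i x) = sA i x)"
    and "\<forall>i j. far_pair n i j \<longrightarrow> (\<forall>x\<in>carrier G_far. p (tF i j x) = sF i j x)"
  shows "p ` env_gens n tA tF = env_gens n sA sF"
  unfolding env_gens_def image_Un image_UN
proof (intro arg_cong2[where f = "(\<union>)"] SUP_cong refl)
  show "p ` tA i ` carrier G_adj = sA i ` carrier G_adj" if "i \<in> {i. adj_pair n i}" for i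
    using assms(1) that by (auto simp: image_image intro!: image_cong)
  show "p ` (case ij of (i, j) \<Rightarrow> tF i j ` carrier G_far) = (case ij of (i, j) \<Rightarrow> sF i j ` carrier G_far)"
    if "ij \<in> {(i, j). far_pair n i j}" for ij
    using assms(2) that by (auto simp: image_image intro!: image_cong split: prod.splits)
qed

lemma env_gens_tau_subset: "env_gens n (tauA n) (tauF n) \<subseteq> SO_set n"
  unfolding env_gens_def using tauA_hom tauF_hom by (fastforce dest: hom_in_carrier)

lemma plane_rotations_subset_env_gens:
  assumes n: "3 \<le> n"
  shows "plane_rotations n \<subseteq> env_gens n (tauA n) (tauF n)"
proof
  fix r assume "r \<in> plane_rotations n"
  then obtain k x where r: "r = block_embed n k x" and k: "Suc (Suc k) \<le> n" and x: "x \<in> SO_set 2"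
    by (auto simp: plane_rotations_def)
  have xc: "x \<in> carrier_mat 2 2" using SO_setD(1)[OF x] .
  show "r \<in> env_gens n (tauA n) (tauF n)"
  proof (cases "k + 3 \<le> n")
    case True
    then have "adj_pair n (k + 1)" "r = tauA n (k + 1) (block_embed 3 0 x)"
      using xc r by (auto simp: adj_pair_def tauA_eq block_embed_block_embed)
    then show ?thesis using block_embed_SO_set[OF x, of 0 3] by (auto simp: env_gens_def)
  next
    case False
    then have "adj_pair n k" "r = tauA n k (block_embed 3 1 x)"
      using xc r k n by (auto simp: adj_pair_def tauA_eq block_embed_block_embed)
    then show ?thesis using block_embed_SO_set[OF x, of 1 3] by (auto simp: env_gens_def)
  qed
qed

lemma generate_env_gens_tau:
  assumes n: "3 \<le> n"
  shows "generate (SO_grp n) (env_gens n (tauA n) (tauF n)) = SO_set n"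
proof
  show "generate (SO_grp n) (env_gens n (tauA n) (tauF n)) \<subseteq> SO_set n"
    using group.generate_incl[OF group_SO_grp, of _ n] env_gens_tau_subset by simp
  have "SO_set n = generate (SO_grp n) (plane_rotations n)"
    using generate_plane_rotations n by simp
  also have "\<dots> \<subseteq> generate (SO_grp n) (env_gens n (tauA n) (tauF n))"
    by (rule group.mono_generate[OF group_SO_grp plane_rotations_subset_env_gens[OF n]])
  finally show "SO_set n \<subseteq> generate (SO_grp n) (env_gens n (tauA n) (tauF n))" .
qed

lemma enveloping_SO:
  assumes n: "3 \<le> n"
  shows "enveloping n (SO_grp n) (tauA n) (tauF n)"
  unfolding enveloping_def
proof (intro conjI allI impI ballI)
  show "generate (SO_grp n) ((\<Union>i\<in>{i. adj_pair n i}. tauA n i ` carrier G_adj) \<union>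
      (\<Union>(i, j)\<in>{(i, j). far_pair n i j}. tauF n i j ` carrier G_far)) = carrier (SO_grp n)"
    using generate_env_gens_tau[OF n] by (simp add: env_gens_def)
  fix i j k x assume "i \<in> {1..n-1}" "j \<in> {1..n-1}" "k \<in> {1..n-1}"
    and "i \<noteq> j \<and> j \<noteq> k \<and> i \<noteq> k" and "x \<in> carrier (SO_grp 2)"
  then show "vmap (tauA n) (tauF n) i j x = vmap (tauA n) (tauF n) k j x"
    by (simp add: vmap_tau)
qed (simp_all add: group_SO_grp tauA_hom tauF_hom)

section \<open>Universality\<close>

locale SO2_amalgam_envelope =
  fixes n :: nat and H :: "('b, 'z) monoid_scheme"
    and sA :: "nat \<Rightarrow> real mat \<Rightarrow> 'b" and sF :: "nat \<Rightarrow> nat \<Rightarrow> real mat \<times> real mat \<Rightarrow> 'b"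
  assumes n3: "3 \<le> n" and env: "enveloping n H sA sF"
begin

lemma group_H: "group H"
  using env by (simp add: enveloping_def)

lemma sA_hom: "adj_pair n i \<Longrightarrow> sA i \<in> hom G_adj H"
  using env by (simp add: enveloping_def)

lemma sF_hom: "far_pair n i j \<Longrightarrow> sF i j \<in> hom G_far H"
  using env by (simp add: enveloping_def)

lemma generate_env_gens: "generate H (env_gens n sA sF) = carrier H"
  using env by (simp add: enveloping_def env_gens_def)

lemma vmap_compat:
  "i \<in> {1..n-1} \<Longrightarrow> j \<in> {1..n-1} \<Longrightarrow> k \<in> {1..n-1} \<Longrightarrow> i \<noteq> j \<Longrightarrow> j \<noteq> k \<Longrightarrow> i \<noteq> k \<Longrightarrow>
    x \<in> SO_set 2 \<Longrightarrow> vmap sA sF i j x = vmap sA sF k j x"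
  using env unfolding enveloping_def by (metis SO_grp_simps(1))

text \<open>By the compatibility condition, all the maps tau_ij o phi^j_ij out of the vertex group
  G_j = SO(2) coincide; vertex_hom j is this common map, computed through one fixed neighbour.\<close>

definition neighbour :: "nat \<Rightarrow> nat" where
  "neighbour k = (if k + 2 \<le> n then k + 1 else k - 1)"

definition vertex_hom :: "nat \<Rightarrow> real mat \<Rightarrow> 'b" where
  "vertex_hom k = vmap sA sF (neighbour k) k"

lemma vmap_eq_vertex_hom:
  assumes "i \<in> {1..n-1}" "k \<in> {1..n-1}" "i \<noteq> k" "x \<in> SO_set 2"
  shows "vmap sA sF i k x = vertex_hom k x"
proof (cases "i = neighbour k")
  case False
  moreover have "neighbour k \<in> {1..n-1}" "neighbour k \<noteq> k" using assms n3 by (auto simp: neighbour_def)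
  ultimately show ?thesis using vmap_compat[of i k "neighbour k" x] assms by (simp add: vertex_hom_def)
qed (simp add: vertex_hom_def)

lemma vertex_hom_lo:
  assumes "1 \<le> k" "k + 2 \<le> n" "x \<in> SO_set 2"
  shows "vertex_hom k x = sA k (block_embed 3 0 x)"
  using vmap_eq_vertex_hom[of "k + 1" k x] assms by (simp add: vmap_def phi_adj_lo_eq SO_setD(1))

lemma vertex_hom_hi:
  assumes "2 \<le> k" "k + 1 \<le> n" "x \<in> SO_set 2"
  shows "vertex_hom k x = sA (k - 1) (block_embed 3 1 x)"
proof -
  have "vmap sA sF (k - 1) k x = sA (k - 1) (block_embed 3 1 x)"
    using assms by (simp add: vmap_def phi_adj_hi_eq SO_setD(1))
  moreover have "k - 1 \<in> {1..n-1}" "k \<in> {1..n-1}" "k - 1 \<noteq> k" using assms by auto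
  ultimately show ?thesis using vmap_eq_vertex_hom[of "k - 1" k x] assms(3) by simp
qed

lemma sF_eq_vertex_hom:
  assumes f: "far_pair n l k" and x: "x \<in> SO_set 2" and y: "y \<in> SO_set 2"
  shows "sF l k (x, y) = vertex_hom l x \<otimes>\<^bsub>H\<^esub> vertex_hom k y"
proof -
  have lk: "l \<in> {1..n-1}" "k \<in> {1..n-1}" "l \<noteq> k" using f by (auto simp: far_pair_def)
  have vh: "vertex_hom l x = sF l k (x, 1\<^sub>m 2)" "vertex_hom k y = sF l k (1\<^sub>m 2, y)"
    using vmap_eq_vertex_hom[of k l x] vmap_eq_vertex_hom[of l k y] lk x y f
    by (auto simp: vmap_def phi_far_lo_def phi_far_hi_def far_pair_def)
  have "(x, 1\<^sub>m 2) \<otimes>\<^bsub>G_far\<^esub> (1\<^sub>m 2, y) = (x, y)"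
    using SO_setD(1)[OF x] SO_setD(1)[OF y] by simp
  then have "sF l k (x, y) = sF l k ((x, 1\<^sub>m 2) \<otimes>\<^bsub>G_far\<^esub> (1\<^sub>m 2, y))" by simp
  also have "\<dots> = sF l k (x, 1\<^sub>m 2) \<otimes>\<^bsub>H\<^esub> sF l k (1\<^sub>m 2, y)"
    by (rule hom_mult[OF sF_hom[OF f]]) (use x y in auto)
  finally show ?thesis using vh by simp
qed

lemma vertex_hom_hom:
  assumes k: "1 \<le> k" "k + 1 \<le> n"
  shows "vertex_hom k \<in> hom (SO_grp 2) H"
proof (cases "k + 2 \<le> n")
  case True
  have "sA k \<circ> block_embed 3 0 \<in> hom (SO_grp 2) H"
    using k True by (intro hom_compose[OF block_embed_hom sA_hom]) (auto simp: adj_pair_def)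
  then show ?thesis
    by (rule group.hom_restrict[OF group_SO_grp]) (use vertex_hom_lo k True in auto)
next
  case False
  have "sA (k - 1) \<circ> block_embed 3 1 \<in> hom (SO_grp 2) H"
    using k False n3 by (intro hom_compose[OF block_embed_hom sA_hom]) (auto simp: adj_pair_def)
  then show ?thesis
    by (rule group.hom_restrict[OF group_SO_grp]) (use vertex_hom_hi k False n3 in auto)
qed

lemma vertex_hom_one: "1 \<le> k \<Longrightarrow> k + 1 \<le> n \<Longrightarrow> vertex_hom k (1\<^sub>m 2) = \<one>\<^bsub>H\<^esub>"
  using hom_one[OF vertex_hom_hom group_SO_grp group_H] by simp

abbreviation GH where "GH \<equiv> SO_grp n \<times>\<times> H"

lemma group_GH: "group GH"
  using DirProd_group[OF group_SO_grp group_H] .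

definition vertex_graph :: "nat \<Rightarrow> real mat \<Rightarrow> real mat \<times> 'b" where
  "vertex_graph k x = (block_embed n (k - 1) x, vertex_hom k x)"

definition V :: "nat \<Rightarrow> (real mat \<times> 'b) set" where
  "V k = vertex_graph k ` SO_set 2"

definition edge_graph :: "nat \<Rightarrow> real mat \<Rightarrow> real mat \<times> 'b" where
  "edge_graph i X = (block_embed n (i - 1) X, sA i X)"

lemma vertex_graph_hom: "1 \<le> k \<Longrightarrow> k + 1 \<le> n \<Longrightarrow> vertex_graph k \<in> hom (SO_grp 2) GH"
  unfolding vertex_graph_def hom_paired using block_embed_hom vertex_hom_hom by simp

lemma subgroup_V: "1 \<le> k \<Longrightarrow> k \<le> n - 1 \<Longrightarrow> subgroup (V k) GH"
  unfolding V_def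
  using group_hom.img_is_subgroup[of "SO_grp 2" GH "vertex_graph k"] vertex_graph_hom[of k]
    group_SO_grp group_GH n3
  by (simp add: group_hom_def group_hom_axioms_def)

lemma edge_graph_hom: "adj_pair n i \<Longrightarrow> edge_graph i \<in> hom G_adj GH"
  unfolding edge_graph_def hom_paired
  using block_embed_hom[of "i - 1" 3 n] sA_hom[of i] adj_pairD[of n i] by simp

lemma edge_graph_lo:
  "adj_pair n i \<Longrightarrow> x \<in> SO_set 2 \<Longrightarrow> edge_graph i (block_embed 3 0 x) = vertex_graph i x"
  using vertex_hom_lo[of i x] block_embed_block_embed[of x 2 0 3 n "i - 1"] SO_setD(1)[of x 2]
    adj_pairD[of n i] by (simp add: edge_graph_def vertex_graph_def)

lemma edge_graph_hi:
  "adj_pair n i \<Longrightarrow> x \<in> SO_set 2 \<Longrightarrow> edge_graph i (block_embed 3 1 x) = vertex_graph (i + 1) x"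
  using vertex_hom_hi[of "i + 1" x] block_embed_block_embed[of x 2 1 3 n "i - 1"] SO_setD(1)[of x 2]
    adj_pairD[of n i] by (simp add: edge_graph_def vertex_graph_def)

lemma edge_graph_euler:
  assumes i: "adj_pair n i" and X: "X \<in> SO_set 3"
  shows "edge_graph i X \<in> V i <#>\<^bsub>GH\<^esub> V (i + 1) <#>\<^bsub>GH\<^esub> V i"
proof -
  obtain a b c where abc: "a \<in> SO_set 2" "b \<in> SO_set 2" "c \<in> SO_set 2"
    and X_eq: "X = block_embed 3 0 a * block_embed 3 1 b * block_embed 3 0 c"
    using SO3_euler[OF X] by blast
  have "edge_graph i X = edge_graph i (block_embed 3 0 a) \<otimes>\<^bsub>GH\<^esub> edge_graph i (block_embed 3 1 b)
      \<otimes>\<^bsub>GH\<^esub> edge_graph i (block_embed 3 0 c)"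
    unfolding X_eq using hom_mult[OF edge_graph_hom[OF i]] abc
    by (simp add: block_embed_SO_set SO_set_mult)
  also have "\<dots> = vertex_graph i a \<otimes>\<^bsub>GH\<^esub> vertex_graph (i + 1) b \<otimes>\<^bsub>GH\<^esub> vertex_graph i c"
    using edge_graph_lo[OF i] edge_graph_hi[OF i] abc by simp
  finally show ?thesis unfolding mem_set_mult3 V_def using abc by blast
qed

lemma V_commute:
  assumes l: "1 \<le> l" "l + 2 \<le> k" "k \<le> n - 1" and u: "u \<in> V l" and v: "v \<in> V k"
  shows "u \<otimes>\<^bsub>GH\<^esub> v = v \<otimes>\<^bsub>GH\<^esub> u"
proof -
  obtain x y where x: "x \<in> SO_set 2" "u = vertex_graph l x" and y: "y \<in> SO_set 2" "v = vertex_graph k y"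
    using u v by (auto simp: V_def)
  have lk: "far_pair n l k" using l by (simp add: far_pair_def)
  have "block_embed n (l - 1) x * block_embed n (k - 1) y = block_embed n (k - 1) y * block_embed n (l - 1) x"
    by (rule block_embed_commute[OF SO_setD(1)[OF x(1)] SO_setD(1)[OF y(1)]]) (use l in auto)
  moreover have "vertex_hom l x \<otimes>\<^bsub>H\<^esub> vertex_hom k y = vertex_hom k y \<otimes>\<^bsub>H\<^esub> vertex_hom l x"
  proof -
    have "(x, y) = (1\<^sub>m 2, y) \<otimes>\<^bsub>G_far\<^esub> (x, 1\<^sub>m 2)" using SO_setD(1)[OF x(1)] SO_setD(1)[OF y(1)] by simp
    then have "sF l k (x, y) = sF l k (1\<^sub>m 2, y) \<otimes>\<^bsub>H\<^esub> sF l k (x, 1\<^sub>m 2)"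
      using hom_mult[OF sF_hom[OF lk], of "(1\<^sub>m 2, y)" "(x, 1\<^sub>m 2)"] x y by simp
    moreover have "vertex_hom l (1\<^sub>m 2) = \<one>\<^bsub>H\<^esub>" "vertex_hom k (1\<^sub>m 2) = \<one>\<^bsub>H\<^esub>"
      using vertex_hom_one l by auto
    moreover have "vertex_hom l x \<in> carrier H" "vertex_hom k y \<in> carrier H"
      using hom_in_carrier[OF vertex_hom_hom] l x y by auto
    ultimately show ?thesis
      using sF_eq_vertex_hom[OF lk] x y group.is_monoid[OF group_H] by (simp add: monoid.l_one monoid.r_one)
  qed
  ultimately show ?thesis using x y by (simp add: vertex_graph_def)
qed

lemma V_braid:
  assumes k: "2 \<le> k" "k \<le> n - 1" and x: "x \<in> V k" and y: "y \<in> V (k - 1)" and z: "z \<in> V k"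
  shows "x \<otimes>\<^bsub>GH\<^esub> y \<otimes>\<^bsub>GH\<^esub> z \<in> V (k - 1) <#>\<^bsub>GH\<^esub> V k <#>\<^bsub>GH\<^esub> V (k - 1)"
proof -
  define i where "i = k - 1"
  have i: "adj_pair n i" "k = i + 1" using k n3 by (auto simp: adj_pair_def i_def)
  obtain x' where x': "x' \<in> SO_set 2" "x = vertex_graph k x'" using x by (auto simp: V_def)
  obtain y' where y': "y' \<in> SO_set 2" "y = vertex_graph i y'" using y by (auto simp: V_def i_def)
  obtain z' where z': "z' \<in> SO_set 2" "z = vertex_graph k z'" using z by (auto simp: V_def)
  note xyz = x'(1) y'(1) z'(1)
  have "x \<otimes>\<^bsub>GH\<^esub> y \<otimes>\<^bsub>GH\<^esub> z = edge_graph i (block_embed 3 1 x')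
      \<otimes>\<^bsub>GH\<^esub> edge_graph i (block_embed 3 0 y') \<otimes>\<^bsub>GH\<^esub> edge_graph i (block_embed 3 1 z')"
    using edge_graph_lo[OF i(1)] edge_graph_hi[OF i(1)] i(2) x' y' z' by simp
  also have "\<dots> = edge_graph i (block_embed 3 1 x' * block_embed 3 0 y' * block_embed 3 1 z')"
    using hom_mult[OF edge_graph_hom[OF i(1)]] xyz by (simp add: block_embed_SO_set SO_set_mult)
  also have "\<dots> \<in> V i <#>\<^bsub>GH\<^esub> V (i + 1) <#>\<^bsub>GH\<^esub> V i"
    using xyz by (intro edge_graph_euler[OF i(1)]) (simp add: block_embed_SO_set SO_set_mult)
  finally show ?thesis using i(2) by simp
qed

sublocale chain: subgroup_chain GH V "n - 1"
proof (intro subgroup_chain.intro[OF group_GH] subgroup_chain_axioms.intro)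
  show "subgroup (V k) GH" if "1 \<le> k" "k \<le> n - 1" for k
    using subgroup_V that .
  show "u \<otimes>\<^bsub>GH\<^esub> v = v \<otimes>\<^bsub>GH\<^esub> u"
    if "1 \<le> l" "l + 2 \<le> k" "k \<le> n - 1" "u \<in> V l" "v \<in> V k" for k l u v
    using V_commute that .
  show "x \<otimes>\<^bsub>GH\<^esub> y \<otimes>\<^bsub>GH\<^esub> z \<in> V (k - 1) <#>\<^bsub>GH\<^esub> V k <#>\<^bsub>GH\<^esub> V (k - 1)"
    if "2 \<le> k" "k \<le> n - 1" "x \<in> V k" "y \<in> V (k - 1)" "z \<in> V k" for k x y z
    using V_braid that .
qed

abbreviation graph where "graph \<equiv> chain.gen_below n"

lemma subgroup_graph: "subgroup graph GH"
  using chain.subgroup_gen_below n3 by simp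

lemma V_subset_graph: "1 \<le> k \<Longrightarrow> k \<le> n - 1 \<Longrightarrow> V k \<subseteq> graph"
  using chain.W_subset_gen_below n3 by simp

lemma group_hom_fst: "group_hom GH (SO_grp n) fst"
  unfolding group_hom_def group_hom_axioms_def using group_GH group_SO_grp
  by (auto intro!: homI simp: mult_DirProd')

lemma fst_gen_below:
  assumes m: "m \<le> n" and g: "g \<in> chain.gen_below m"
  shows "id_outside n {0..<m} (fst g)"
proof -
  have "fst ` (\<Union>k\<in>{1..<m}. V k) \<subseteq> {A \<in> SO_set n. id_outside n {0..<m} A}"
  proof
    fix A assume "A \<in> fst ` (\<Union>k\<in>{1..<m}. V k)"
    then obtain k x where k: "1 \<le> k" "k < m" and x: "x \<in> SO_set 2" and A: "A = block_embed n (k - 1) x"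
      by (auto simp: V_def vertex_graph_def)
    show "A \<in> {A \<in> SO_set n. id_outside n {0..<m} A}"
      unfolding A using block_embed_SO_set[OF x, of "k - 1" n] k m
        id_outside_mono[OF id_outside_block_embed[OF SO_setD(1)[OF x], of n "k - 1"], of "{0..<m}"]
      by (simp add: subset_iff)
  qed
  then have "generate (SO_grp n) (fst ` (\<Union>k\<in>{1..<m}. V k)) \<subseteq> {A \<in> SO_set n. id_outside n {0..<m} A}"
    by (rule group.generate_subgroup_incl[OF group_SO_grp _ subgroup_id_outside])
  moreover have "fst g \<in> generate (SO_grp n) (fst ` (\<Union>k\<in>{1..<m}. V k))"
    using group_hom.generate_img[OF group_hom_fst chain.gens_below_carrier] g m n3
    unfolding chain.gen_below_def by auto
  ultimately show ?thesis by auto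
qed

text \<open>Elements of gen_below m fix the coordinate m, and the only rotation in the coordinates
  m-1, m doing so is the identity.\<close>

lemma V_trivial:
  assumes m: "1 \<le> m" "m \<le> n - 1" and v: "v \<in> V m" and "fst v \<in> fst ` chain.gen_below m"
  shows "v = \<one>\<^bsub>GH\<^esub>"
proof -
  obtain x where x: "x \<in> SO_set 2" "v = vertex_graph m x" using v by (auto simp: V_def)
  have "id_outside n {0..<m} (block_embed n (m - 1) x)"
    using fst_gen_below[of m] assms x n3 by (auto simp: vertex_graph_def)
  then have "block_embed n (m - 1) x $$ (m - 1, m) = 0" "block_embed n (m - 1) x $$ (m, m) = 1"
    using m n3 unfolding id_outside_def by auto
  moreover have "block_embed n (m - 1) x $$ (m - 1, m) = x $$ (0, 1)"
    "block_embed n (m - 1) x $$ (m, m) = x $$ (1, 1)"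
    using m n3 SO_setD(1)[OF x(1)] by (auto simp: block_embed_def)
  ultimately have "x $$ (0, 1) = 0" "x $$ (1, 1) = 1" by simp_all
  then have "x = 1\<^sub>m 2" by (rule SO2_eq_one[OF x(1)])
  then show ?thesis
    using x hom_one[OF vertex_graph_hom group_SO_grp group_GH] m n3 by auto
qed

lemma graph_kernel:
  assumes "(1\<^sub>m n, h) \<in> graph"
  shows "h = \<one>\<^bsub>H\<^esub>"
proof -
  have "(1\<^sub>m n, h) = \<one>\<^bsub>GH\<^esub>"
    by (rule chain.gen_below_kernel_trivial[OF group_hom_fst V_trivial]) (use assms n3 in auto)
  then show ?thesis by simp
qed

lemma graph_fst_surj:
  assumes g: "g \<in> SO_set n"
  shows "\<exists>h. (g, h) \<in> graph"
proof -
  have sub: "subgroup (fst ` graph) (SO_grp n)"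
    using group_hom.subgroup_img_is_subgroup[OF group_hom_fst subgroup_graph] .
  have "plane_rotations n \<subseteq> fst ` graph"
  proof
    fix r assume "r \<in> plane_rotations n"
    then obtain k x where r: "r = block_embed n k x" and k: "Suc (Suc k) \<le> n" and x: "x \<in> SO_set 2"
      by (auto simp: plane_rotations_def)
    have "k + 1 \<le> n - 1" using k by simp
    then have "vertex_graph (k + 1) x \<in> graph" using V_subset_graph[of "k + 1"] x by (auto simp: V_def)
    then show "r \<in> fst ` graph" using r by (force simp: vertex_graph_def)
  qed
  then have "generate (SO_grp n) (plane_rotations n) \<subseteq> fst ` graph"
    by (rule group.generate_subgroup_incl[OF group_SO_grp _ sub])
  then have "g \<in> fst ` graph" using g generate_plane_rotations[of n] n3 by auto
  then obtain p where "p \<in> graph" "g = fst p" by blast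
  then show ?thesis by (metis prod.collapse)
qed

lemma graph_functional:
  assumes "(g, h) \<in> graph" "(g, h') \<in> graph"
  shows "h = h'"
proof -
  have c: "g \<in> SO_set n" "h \<in> carrier H" "h' \<in> carrier H"
    using assms subgroup.subset[OF subgroup_graph] by auto
  have "(g, h) \<otimes>\<^bsub>GH\<^esub> inv\<^bsub>GH\<^esub> (g, h') \<in> graph"
    using assms subgroup.m_closed[OF subgroup_graph] subgroup.m_inv_closed[OF subgroup_graph] by blast
  moreover have "(g, h) \<otimes>\<^bsub>GH\<^esub> inv\<^bsub>GH\<^esub> (g, h') = (1\<^sub>m n, h \<otimes>\<^bsub>H\<^esub> inv\<^bsub>H\<^esub> h')"
    using c inv_DirProd[OF group_SO_grp group_H] group.r_inv[OF group_SO_grp, of g n] by simp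
  ultimately have "h \<otimes>\<^bsub>H\<^esub> inv\<^bsub>H\<^esub> h' = \<one>\<^bsub>H\<^esub>" using graph_kernel by simp
  then have "h = \<one>\<^bsub>H\<^esub> \<otimes>\<^bsub>H\<^esub> h'"
    using c group.inv_solve_right'[OF group_H] group.is_monoid[OF group_H] monoid.one_closed by metis
  then show ?thesis using c group.is_monoid[OF group_H] by (simp add: monoid.l_one)
qed

definition univ_map :: "real mat \<Rightarrow> 'b" where
  "univ_map g = (THE h. (g, h) \<in> graph)"

lemma univ_map_eq: "(g, h) \<in> graph \<Longrightarrow> univ_map g = h"
  unfolding univ_map_def using graph_functional by blast

lemma univ_map_graph: "g \<in> SO_set n \<Longrightarrow> (g, univ_map g) \<in> graph"
  using graph_fst_surj univ_map_eq by blast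

lemma univ_map_hom: "univ_map \<in> hom (SO_grp n) H"
proof (rule homI)
  fix g assume "g \<in> carrier (SO_grp n)"
  then show "univ_map g \<in> carrier H" using univ_map_graph subgroup.subset[OF subgroup_graph] by fastforce
next
  fix g g' assume "g \<in> carrier (SO_grp n)" "g' \<in> carrier (SO_grp n)"
  then have "(g, univ_map g) \<otimes>\<^bsub>GH\<^esub> (g', univ_map g') \<in> graph"
    using univ_map_graph subgroup.m_closed[OF subgroup_graph] by auto
  then show "univ_map (g \<otimes>\<^bsub>SO_grp n\<^esub> g') = univ_map g \<otimes>\<^bsub>H\<^esub> univ_map g'" using univ_map_eq by simp
qed

lemma univ_map_tauA:
  assumes i: "adj_pair n i" and X: "X \<in> carrier G_adj"
  shows "univ_map (tauA n i X) = sA i X"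
proof -
  have "edge_graph i X \<in> graph"
  proof -
    have "1 \<le> i" "i \<le> n - 1" "i + 1 \<le> n - 1" using adj_pairD[OF i] by auto
    then have "V i \<subseteq> graph" "V (i + 1) \<subseteq> graph" using V_subset_graph by auto
    moreover obtain a b c where "a \<in> V i" "b \<in> V (i + 1)" "c \<in> V i"
      and abc: "edge_graph i X = a \<otimes>\<^bsub>GH\<^esub> b \<otimes>\<^bsub>GH\<^esub> c"
      using edge_graph_euler[OF i X[unfolded SO_grp_simps]] unfolding mem_set_mult3 by blast
    ultimately have "a \<in> graph" "b \<in> graph" "c \<in> graph" by auto
    then show ?thesis unfolding abc by (intro subgroup.m_closed[OF subgroup_graph])
  qed
  then show ?thesis
    using univ_map_eq tauA_eq adj_pairD[OF i] SO_setD(1) X by (simp add: edge_graph_def)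
qed

lemma univ_map_tauF:
  assumes f: "far_pair n i j" and p: "p \<in> carrier G_far"
  shows "univ_map (tauF n i j p) = sF i j p"
proof -
  obtain x y where xy: "p = (x, y)" "x \<in> SO_set 2" "y \<in> SO_set 2" using p by auto
  have ij: "1 \<le> i" "i \<le> n - 1" "1 \<le> j" "j \<le> n - 1" using f by (auto simp: far_pair_def)
  have "vertex_graph i x \<in> graph" "vertex_graph j y \<in> graph"
    using V_subset_graph[of i] V_subset_graph[of j] ij xy by (auto simp: V_def)
  then have "vertex_graph i x \<otimes>\<^bsub>GH\<^esub> vertex_graph j y \<in> graph"
    by (rule subgroup.m_closed[OF subgroup_graph])
  moreover have "vertex_graph i x \<otimes>\<^bsub>GH\<^esub> vertex_graph j y = (tauF n i j p, sF i j p)"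
    using xy ij sF_eq_vertex_hom[OF f] by (simp add: vertex_graph_def tauF_eq SO_setD(1))
  ultimately show ?thesis using univ_map_eq by simp
qed

lemma univ_map_surj: "univ_map ` SO_set n = carrier H"
proof -
  have "univ_map ` SO_set n = univ_map ` generate (SO_grp n) (env_gens n (tauA n) (tauF n))"
    using generate_env_gens_tau n3 by simp
  also have "\<dots> = generate H (univ_map ` env_gens n (tauA n) (tauF n))"
    using group_hom.generate_img[of "SO_grp n" H univ_map] env_gens_tau_subset univ_map_hom
      group_SO_grp group_H by (simp add: group_hom_def group_hom_axioms_def)
  also have "univ_map ` env_gens n (tauA n) (tauF n) = env_gens n sA sF"
    using univ_map_tauA univ_map_tauF by (intro env_gens_image) auto
  finally show ?thesis using generate_env_gens by simp
qed

lemma univ_map_unique: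
  assumes q: "q \<in> hom (SO_grp n) H"
    and qA: "\<forall>i. adj_pair n i \<longrightarrow> (\<forall>x\<in>carrier G_adj. q (tauA n i x) = sA i x)"
    and qF: "\<forall>i j. far_pair n i j \<longrightarrow> (\<forall>x\<in>carrier G_far. q (tauF n i j x) = sF i j x)"
    and g: "g \<in> SO_set n"
  shows "q g = univ_map g"
proof (rule group.hom_eq_on_generate[OF group_SO_grp q univ_map_hom group_H
      env_gens_tau_subset[of n, folded SO_grp_simps(1)]])
  show "\<forall>s\<in>env_gens n (tauA n) (tauF n). q s = univ_map s"
    using qA qF univ_map_tauA univ_map_tauF by (auto simp: env_gens_def)
  show "g \<in> generate (SO_grp n) (env_gens n (tauA n) (tauF n))"
    using generate_env_gens_tau n3 g by simp
qed

lemma univ_map_universal: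
  "\<exists>p. p \<in> hom (SO_grp n) H \<and> p ` carrier (SO_grp n) = carrier H \<and>
    (\<forall>i. adj_pair n i \<longrightarrow> (\<forall>x\<in>carrier G_adj. p (tauA n i x) = sA i x)) \<and>
    (\<forall>i j. far_pair n i j \<longrightarrow> (\<forall>x\<in>carrier G_far. p (tauF n i j x) = sF i j x)) \<and>
    (\<forall>q. q \<in> hom (SO_grp n) H \<and> q ` carrier (SO_grp n) = carrier H \<and>
      (\<forall>i. adj_pair n i \<longrightarrow> (\<forall>x\<in>carrier G_adj. q (tauA n i x) = sA i x)) \<and>
      (\<forall>i j. far_pair n i j \<longrightarrow> (\<forall>x\<in>carrier G_far. q (tauF n i j x) = sF i j x))
      \<longrightarrow> (\<forall>x\<in>carrier (SO_grp n). q x = p x))"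
proof (intro exI[of _ univ_map] conjI allI impI ballI)
  show "univ_map \<in> hom (SO_grp n) H" by (rule univ_map_hom)
  show "univ_map ` carrier (SO_grp n) = carrier H" using univ_map_surj by simp
  show "univ_map (tauA n i x) = sA i x" if "adj_pair n i" "x \<in> carrier G_adj" for i x
    using univ_map_tauA that .
  show "univ_map (tauF n i j x) = sF i j x" if "far_pair n i j" "x \<in> carrier G_far" for i j x
    using univ_map_tauF that .
  show "q x = univ_map x" if "q \<in> hom (SO_grp n) H \<and> q ` carrier (SO_grp n) = carrier H \<and>
      (\<forall>i. adj_pair n i \<longrightarrow> (\<forall>x\<in>carrier G_adj. q (tauA n i x) = sA i x)) \<and>
      (\<forall>i j. far_pair n i j \<longrightarrow> (\<forall>x\<in>carrier G_far. q (tauF n i j x) = sF i j x))"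
    and "x \<in> carrier (SO_grp n)" for q x
    using univ_map_unique that by simp
qed

end

theorem mainTheorem5:
  fixes n :: nat
  assumes "n \<ge> 3"
  shows "enveloping n (SO_grp n) (tauA n) (tauF n) \<and>
    (\<forall>(H :: 'b monoid) sA sF. enveloping n H sA sF \<longrightarrow>
       (\<exists>p. p \<in> hom (SO_grp n) H \<and> p ` carrier (SO_grp n) = carrier H \<and>
            (\<forall>i. adj_pair n i \<longrightarrow> (\<forall>x\<in>carrier G_adj. p (tauA n i x) = sA i x)) \<and>
            (\<forall>i j. far_pair n i j \<longrightarrow> (\<forall>x\<in>carrier G_far. p (tauF n i j x) = sF i j x)) \<and>
            (\<forall>q. q \<in> hom (SO_grp n) H \<and> q ` carrier (SO_grp n) = carrier H \<and>
                 (\<forall>i. adj_pair n i \<longrightarrow> (\<forall>x\<in>carrier G_adj. q (tauA n i x) = sA i x)) \<and>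
                 (\<forall>i j. far_pair n i j \<longrightarrow> (\<forall>x\<in>carrier G_far. q (tauF n i j x) = sF i j x))
                 \<longrightarrow> (\<forall>x\<in>carrier (SO_grp n). q x = p x))))"
  using enveloping_SO[OF assms] SO2_amalgam_envelope.univ_map_universal[of n] assms
  unfolding SO2_amalgam_envelope_def by blast

end
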